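(* Let $n\geq 5$ and $3\leq\Delta\leq n-2$ be integers, and let $U$ be a connected unicyclic graph with $n$ vertices and maximum degree $\Delta$. (i) If $3\leq\Delta\leq\lfloor\frac{n+1}{2}\rfloor$, then $$SO(U)\geq \Delta\sqrt{\Delta^2+4}+\sqrt{8}\,(n-2\Delta+2)+\sqrt{5}\,(\Delta-2),$$ with equality if and only if $U$ is isomorphic to a graph $U_\Delta$, i.e. a graph consisting of a cycle $C$ (of any length at least $3$) together with $\Delta-2$ paths, each with at least $2$ edges, each having one endpoint at the same vertex $v_0$ of $C$, and these paths pairwise sharing no vertex other than $v_0$ and sharing no vertex with $C$ other than $v_0$. (ii) If $\lfloor\frac{n+1}{2}\rfloor<\Delta\leq n-2$, then $$SO(U)\geq (n-\Delta+1)\sqrt{\Delta^2+4}+(2\Delta-n-1)\sqrt{\Delta^2+1}+\sqrt{5}\,(n-\Delta-1)+\sqrt{8},$$ with equality if and only if $U\cong U_{n,\Delta}$, where $U_{n,\Delta}$ is the graph obtained from a triangle $C_3$ by attaching, at one vertex $v_0$ of the triangle, $2\Delta-n-1$ pendant edges and $n-\Delta-1$ pendant paths with $2$ edges each.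
   Context: All graphs are finite, simple and undirected; $d_G(v)$ denotes the degree of a vertex $v$ in $G$. A unicyclic graph is a connected graph with exactly one cycle (equivalently, $|E|=|V|$). The Sombor index of a graph $G$ is $SO(G)=\sum_{uv\in E(G)}\sqrt{d_G(u)^2+d_G(v)^2}$. *)

theory Defs
  imports Complex_Main
begin

definition simple_graph :: "'a set \<Rightarrow> 'a set set \<Rightarrow> bool" where
  "simple_graph V E \<longleftrightarrow> finite V \<and>
     (\<forall>e\<in>E. \<exists>u v. e = {u, v} \<and> u \<noteq> v \<and> u \<in> V \<and> v \<in> V)"

definition degree :: "'a set set \<Rightarrow> 'a \<Rightarrow> nat" where
  "degree E v = card {e \<in> E. v \<in> e}"

definition max_degree :: "'a set \<Rightarrow> 'a set set \<Rightarrow> nat" where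
  "max_degree V E = Max (degree E ` V)"

definition adj_rel :: "'a set set \<Rightarrow> ('a \<times> 'a) set" where
  "adj_rel E = {(x, y). {x, y} \<in> E}"

definition connected_graph :: "'a set \<Rightarrow> 'a set set \<Rightarrow> bool" where
  "connected_graph V E \<longleftrightarrow> V \<noteq> {} \<and> (\<forall>u\<in>V. \<forall>v\<in>V. (u, v) \<in> (adj_rel E)\<^sup>*)"

definition unicyclic :: "'a set \<Rightarrow> 'a set set \<Rightarrow> bool" where
  "unicyclic V E \<longleftrightarrow> connected_graph V E \<and> card E = card V"

definition sombor :: "'a set set \<Rightarrow> real" where
  "sombor E = (\<Sum>e\<in>E. sqrt (\<Sum>v\<in>e. real (degree E v) ^ 2))"

definition graph_iso :: "'a set \<Rightarrow> 'a set set \<Rightarrow> 'b set \<Rightarrow> 'b set set \<Rightarrow> bool" where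
  "graph_iso V E V' E' \<longleftrightarrow> (\<exists>f. bij_betw f V V' \<and>
     (\<forall>x\<in>V. \<forall>y\<in>V. {x, y} \<in> E \<longleftrightarrow> {f x, f y} \<in> E'))"

definition path_edges :: "'a list \<Rightarrow> 'a set set" where
  "path_edges xs = {{xs ! i, xs ! Suc i} | i. Suc i < length xs}"

definition cycle_edges :: "'a list \<Rightarrow> 'a set set" where
  "cycle_edges cs = path_edges cs \<union> {{last cs, hd cs}}"

definition is_U_Delta :: "'a set \<Rightarrow> 'a set set \<Rightarrow> nat \<Rightarrow> bool" where
  "is_U_Delta V E \<Delta> \<longleftrightarrow> (\<exists>cs ps.
     distinct cs \<and> length cs \<ge> 3 \<and> length ps = \<Delta> - 2 \<and>
     (\<forall>p\<in>set ps. distinct p \<and> length p \<ge> 3 \<and> hd p = hd cs \<and> set p \<inter> set cs = {hd cs}) \<and>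
     (\<forall>i<length ps. \<forall>j<length ps. i \<noteq> j \<longrightarrow> set (ps ! i) \<inter> set (ps ! j) = {hd cs}) \<and>
     V = set cs \<union> \<Union> (set ` set ps) \<and>
     E = cycle_edges cs \<union> \<Union> (path_edges ` set ps))"

definition U_n_Delta_V :: "nat \<Rightarrow> nat \<Rightarrow> nat set" where
  "U_n_Delta_V n \<Delta> = {0..<n}"

definition U_n_Delta_E :: "nat \<Rightarrow> nat \<Rightarrow> nat set set" where
  "U_n_Delta_E n \<Delta> = (let p = 2 * \<Delta> - n - 1; q = n - \<Delta> - 1 in
     {{0, 1}, {1, 2}, {0, 2}} \<union>
     {{0, 3 + i} | i. i < p} \<union>
     {{0, 3 + p + 2 * j} | j. j < q} \<union>
     {{3 + p + 2 * j, 4 + p + 2 * j} | j. j < q})"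

end

theory Submission
  imports Defs
begin

section \<open>Simple graphs\<close>

definition neighbors :: "'a set set \<Rightarrow> 'a \<Rightarrow> 'a set" where
  "neighbors E v = {u. {v, u} \<in> E}"

definition pendant_neighbors :: "'a set set \<Rightarrow> 'a \<Rightarrow> 'a set" where
  "pendant_neighbors E v = {u \<in> neighbors E v. degree E u = 1}"

lemma mem_neighbors_iff [simp]: "u \<in> neighbors E v \<longleftrightarrow> {v, u} \<in> E"
  by (simp add: neighbors_def)

lemma adj_rel_iff [simp]: "(u, v) \<in> adj_rel E \<longleftrightarrow> {u, v} \<in> E"
  by (simp add: adj_rel_def)

lemma sym_adj_rel: "sym (adj_rel E)"
  by (auto simp: sym_def insert_commute)

lemma simple_graph_subset: "simple_graph V E \<Longrightarrow> E' \<subseteq> E \<Longrightarrow> simple_graph V E'"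
  by (auto simp: simple_graph_def)

lemma degree_Diff_le: "finite E \<Longrightarrow> degree (E - X) v \<le> degree E v"
  unfolding degree_def by (rule card_mono) auto

lemma degree_Diff_edge:
  assumes "finite E" "e \<in> E"
  shows "degree (E - {e}) v = (if v \<in> e then degree E v - 1 else degree E v)"
proof -
  have "{e' \<in> E - {e}. v \<in> e'} = {e' \<in> E. v \<in> e'} - {e}" by auto
  then show ?thesis unfolding degree_def using assms by auto
qed

context
  fixes V :: "'a set" and E :: "'a set set"
  assumes simple: "simple_graph V E"
begin

lemma finite_vertices: "finite V"
  using simple by (simp add: simple_graph_def)

lemma edge_subset_vertices: "e \<in> E \<Longrightarrow> e \<subseteq> V"
  using simple by (auto simp: simple_graph_def)

lemma finite_edges: "finite E"
proof (rule finite_subset)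
  show "E \<subseteq> Pow V"
    using edge_subset_vertices by blast
qed (simp add: finite_vertices)

lemma edgeE:
  assumes "e \<in> E"
  obtains u v where "e = {u, v}" "u \<noteq> v" "u \<in> V" "v \<in> V"
  using simple assms by (auto simp: simple_graph_def)

lemma edge_vertices: "{u, v} \<in> E \<Longrightarrow> u \<in> V \<and> v \<in> V"
  using edge_subset_vertices by blast

lemma edge_distinct: "{u, v} \<in> E \<Longrightarrow> u \<noteq> v"
  using simple by (auto simp: simple_graph_def doubleton_eq_iff)

lemma edge_at_vertexE:
  assumes "e \<in> E" "x \<in> e"
  obtains y where "e = {x, y}" "y \<noteq> x"
  using assms edgeE[of e] by (metis insert_commute insertE singletonD)

lemma card_edge: "e \<in> E \<Longrightarrow> card e = 2"
  by (metis edgeE card_2_iff)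

lemma neighbors_subset: "neighbors E v \<subseteq> V"
  using edge_vertices by auto

lemma finite_neighbors: "finite (neighbors E v)"
  using neighbors_subset finite_vertices by (rule finite_subset)

lemma not_mem_neighbors_self: "v \<notin> neighbors E v"
  using edge_distinct by (metis mem_neighbors_iff)

lemma degree_eq_card_neighbors: "degree E v = card (neighbors E v)"
proof -
  have "bij_betw (\<lambda>u. {v, u}) (neighbors E v) {e \<in> E. v \<in> e}"
  proof (rule bij_betwI')
    show "{v, x} = {v, y} \<longleftrightarrow> x = y" for x y
      by (auto simp: doubleton_eq_iff)
    show "\<exists>x\<in>neighbors E v. e = {v, x}" if e: "e \<in> {e \<in> E. v \<in> e}" for e
    proof -
      obtain x where "e = {v, x}"
        using e edge_at_vertexE[of e v] by blast
      then show ?thesis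
        using e by auto
    qed
  qed auto
  then show ?thesis
    unfolding degree_def by (simp add: bij_betw_same_card)
qed

lemma two_le_degree:
  assumes "{v, a} \<in> E" "{v, b} \<in> E" "a \<noteq> b"
  shows "2 \<le> degree E v"
proof -
  have "card {a, b} \<le> card (neighbors E v)"
    using assms finite_neighbors by (intro card_mono) auto
  then show ?thesis
    using assms(3) degree_eq_card_neighbors by simp
qed

lemma degree_oneE:
  assumes "degree E x = 1"
  obtains y where "neighbors E x = {y}"
  using assms degree_eq_card_neighbors by (auto simp: card_1_singleton_iff)

lemma edges_at_leaf:
  assumes "neighbors E x = {y}"
  shows "{e \<in> E. x \<in> e} = {{x, y}}"
proof -
  have "e = {x, y}" if e: "e \<in> E" "x \<in> e" for e
  proof -
    obtain z where z: "e = {x, z}"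
      using edge_at_vertexE[OF e] by blast
    then have "z \<in> neighbors E x"
      using e by simp
    then show ?thesis
      using assms z by simp
  qed
  then show ?thesis
    using assms by auto
qed

lemma handshake_on:
  assumes "finite C"
  shows "(\<Sum>v\<in>C. degree E v) = (\<Sum>e\<in>E. card (e \<inter> C))"
proof -
  have "degree E v = (\<Sum>e\<in>E. if v \<in> e then 1 else 0)" for v
    unfolding degree_def using sum.inter_filter[OF finite_edges, of "\<lambda>_. 1::nat" "\<lambda>e. v \<in> e"]
    by simp
  then have "(\<Sum>v\<in>C. degree E v) = (\<Sum>v\<in>C. \<Sum>e\<in>E. if v \<in> e then 1 else 0)"
    by simp
  also have "\<dots> = (\<Sum>e\<in>E. \<Sum>v\<in>C. if v \<in> e then 1 else 0)"
    by (rule sum.swap)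
  also have "\<dots> = (\<Sum>e\<in>E. card (e \<inter> C))"
  proof (rule sum.cong[OF refl])
    show "(\<Sum>v\<in>C. if v \<in> e then 1 else 0) = card (e \<inter> C)" for e
      using sum.inter_filter[OF assms, of "\<lambda>_. 1::nat" "\<lambda>v. v \<in> e"]
      by (simp add: Int_commute Int_def)
  qed
  finally show ?thesis .
qed

lemma handshake: "(\<Sum>v\<in>V. degree E v) = 2 * card E"
proof -
  have "card (e \<inter> V) = 2" if "e \<in> E" for e
    using that card_edge edge_subset_vertices by (simp add: Int_absorb2)
  then show ?thesis
    using handshake_on[OF finite_vertices] by simp
qed


lemma sum_vertex_edge_swap:
  "(\<Sum>e\<in>E. \<Sum>v\<in>e. f e v) = (\<Sum>v\<in>V. \<Sum>e\<in>{e \<in> E. v \<in> e}. f e v)"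
proof -
  have "(\<Sum>v\<in>e. f e v) = (\<Sum>v\<in>V. if v \<in> e then f e v else 0)" if "e \<in> E" for e
  proof -
    have "{v \<in> V. v \<in> e} = e"
      using that edge_subset_vertices by auto
    then show ?thesis
      using sum.inter_filter[OF finite_vertices, of "f e" "\<lambda>v. v \<in> e"] by simp
  qed
  then have "(\<Sum>e\<in>E. \<Sum>v\<in>e. f e v) = (\<Sum>e\<in>E. \<Sum>v\<in>V. if v \<in> e then f e v else 0)"
    by (rule sum.cong[OF refl])
  also have "\<dots> = (\<Sum>v\<in>V. \<Sum>e\<in>E. if v \<in> e then f e v else 0)"
    by (rule sum.swap)
  also have "\<dots> = (\<Sum>v\<in>V. \<Sum>e\<in>{e \<in> E. v \<in> e}. f e v)"
    by (rule sum.cong[OF refl]) (simp add: sum.inter_filter[OF finite_edges])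
  finally show ?thesis .
qed

end

context
  fixes V :: "'a set" and E :: "'a set set"
  assumes simple: "simple_graph V E" and connected: "connected_graph V E"
begin

lemma reachable: "u \<in> V \<Longrightarrow> v \<in> V \<Longrightarrow> (u, v) \<in> (adj_rel E)\<^sup>*"
  using connected by (simp add: connected_graph_def)

lemma one_le_degree:
  assumes "v \<in> V" "2 \<le> card V"
  shows "1 \<le> degree E v"
proof -
  have "V \<noteq> {v}"
    using assms(2) by auto
  then obtain u where u: "u \<in> V" "u \<noteq> v"
    using assms(1) by blast
  then obtain w where "(v, w) \<in> adj_rel E"
    using reachable[OF assms(1) u(1)] by (metis converse_rtranclE)
  then have "neighbors E v \<noteq> {}"
    by auto
  then show ?thesis
    using degree_eq_card_neighbors[OF simple] finite_neighbors[OF simple]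
    by (simp add: Suc_le_eq card_gt_0_iff)
qed

lemma adjacent_leaves:
  assumes "{u, w} \<in> E" "degree E u = 1" "degree E w = 1"
  shows "V = {u, w}"
proof -
  have "neighbors E u = {w}" "neighbors E w = {u}"
    using assms degree_oneE[OF simple] by (metis insert_commute mem_neighbors_iff singletonD)+
  then have "adj_rel E `` {u, w} \<subseteq> {u, w}"
    by auto
  then have closed: "(adj_rel E)\<^sup>* `` {u, w} = {u, w}"
    by (rule Image_closed_trancl)
  have uw: "u \<in> V" "w \<in> V"
    using edge_vertices[OF simple assms(1)] by auto
  have "v \<in> {u, w}" if "v \<in> V" for v
    using closed reachable[OF uw(1) that] by blast
  then show ?thesis
    using uw by blast
qed

text \<open>A set \<open>S\<close> of vertices spans at most \<open>|E| - |V - S|\<close> edges: each vertex outside \<open>S\<close>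
  can be reached through a fresh edge.\<close>
lemma card_edges_within_add_card_outside:
  assumes "S \<subseteq> V" "S \<noteq> {}"
  shows "card {e \<in> E. e \<subseteq> S} + card (V - S) \<le> card E"
  using assms
proof (induction "card (V - S)" arbitrary: S rule: less_induct)
  case less
  show ?case
  proof (cases "V - S = {}")
    case True
    have "card {e \<in> E. e \<subseteq> S} \<le> card E"
      using finite_edges[OF simple] by (intro card_mono) auto
    then show ?thesis
      using True by (metis add_0_right card.empty)
  next
    case False
    then obtain s t where st: "s \<in> S" "t \<in> V" "t \<notin> S"
      using less.prems by blast
    have "(s, t) \<in> (adj_rel E)\<^sup>*"
      using reachable st less.prems(1) by blast
    then have "t \<in> (adj_rel E)\<^sup>* `` S"
      using st(1) by blast
    then have "\<not> adj_rel E `` S \<subseteq> S"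
      using Image_closed_trancl st(3) by metis
    then obtain x y where xy: "{x, y} \<in> E" "x \<in> S" "y \<notin> S"
      unfolding adj_rel_def by blast
    have y: "y \<in> V"
      using edge_vertices[OF simple xy(1)] by simp
    have card_outside: "card (V - S) = Suc (card (V - insert y S))"
    proof -
      have eq: "V - S = insert y (V - insert y S)"
        using y xy(3) by auto
      show ?thesis
        unfolding eq using finite_vertices[OF simple] by (intro card_insert_disjoint) auto
    qed
    have "card {e \<in> E. e \<subseteq> insert y S} + card (V - insert y S) \<le> card E"
    proof (rule less.hyps)
      show "card (V - insert y S) < card (V - S)"
        using card_outside by simp
    qed (use less.prems(1) y in auto)
    moreover have "card (insert {x, y} {e \<in> E. e \<subseteq> S}) \<le> card {e \<in> E. e \<subseteq> insert y S}"
      using xy finite_edges[OF simple] by (intro card_mono) auto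
    moreover have "card (insert {x, y} {e \<in> E. e \<subseteq> S}) = Suc (card {e \<in> E. e \<subseteq> S})"
      using xy(3) finite_edges[OF simple] by (intro card_insert_disjoint) auto
    ultimately show ?thesis
      using card_outside by simp
  qed
qed

end

lemma card_edges_within_le_card:
  assumes simple: "simple_graph V E" and "unicyclic V E" "S \<subseteq> V" "S \<noteq> {}"
  shows "card {e \<in> E. e \<subseteq> S} \<le> card S"
proof -
  have "card {e \<in> E. e \<subseteq> S} + card (V - S) \<le> card E"
    using card_edges_within_add_card_outside[OF simple] assms unfolding unicyclic_def by blast
  moreover have "card (V - S) + card S = card V"
    using assms(3) finite_vertices[OF simple] by (metis card_Diff_subset card_mono diff_add finite_subset)
  ultimately show ?thesis
    using assms(2) unfolding unicyclic_def by linarith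
qed

lemma rtrancl_remove_leaf:
  assumes leaf: "neighbors E x = {y}" and "y \<noteq> x"
    and "(u, w) \<in> (adj_rel E)\<^sup>*" "u \<noteq> x"
  shows "(u, if w = x then y else w) \<in> (adj_rel (E - {{x, y}}))\<^sup>*"
  using assms(3,4)
proof (induction rule: rtrancl_induct)
  case (step v w)
  then have vw: "{v, w} \<in> E"
    by simp
  have to_leaf: "w = x \<Longrightarrow> v = y" and from_leaf: "v = x \<Longrightarrow> w = y"
    using vw leaf mem_neighbors_iff[of _ E x] by (metis insert_commute singletonD)+
  show ?case
  proof (cases "v = x \<or> w = x")
    case True
    then show ?thesis
      using step to_leaf from_leaf \<open>y \<noteq> x\<close> by auto
  next
    case False
    then have "(v, w) \<in> adj_rel (E - {{x, y}})"
      using vw by (auto simp: doubleton_eq_iff)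
    then show ?thesis
      using step False by (simp add: rtrancl_into_rtrancl)
  qed
qed simp

lemma remove_leaf:
  assumes simple: "simple_graph V E" and connected: "connected_graph V E"
    and "x \<in> V" "V \<noteq> {x}" and leaf: "neighbors E x = {y}"
  shows "simple_graph (V - {x}) (E - {{x, y}})" and "connected_graph (V - {x}) (E - {{x, y}})"
    and "y \<in> V - {x}" and "card (V - {x}) + 1 = card V" and "card (E - {{x, y}}) + 1 = card E"
    and "degree (E - {{x, y}}) y + 1 = degree E y"
proof -
  have edge: "{x, y} \<in> E"
    using leaf by auto
  then show y: "y \<in> V - {x}"
    using edge_vertices[OF simple] edge_distinct[OF simple] by blast
  show "simple_graph (V - {x}) (E - {{x, y}})"
    unfolding simple_graph_def
  proof (intro conjI ballI)
    show "finite (V - {x})"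
      using finite_vertices[OF simple] by simp
    fix e assume e: "e \<in> E - {{x, y}}"
    then have "x \<notin> e"
      using edges_at_leaf[OF simple leaf] by blast
    then show "\<exists>u v. e = {u, v} \<and> u \<noteq> v \<and> u \<in> V - {x} \<and> v \<in> V - {x}"
      using e edgeE[OF simple, of e] by (metis DiffD1 DiffI insertCI singletonD)
  qed
  show "connected_graph (V - {x}) (E - {{x, y}})"
    unfolding connected_graph_def
  proof (intro conjI ballI)
    show "V - {x} \<noteq> {}"
      using assms(3,4) by blast
    fix u w assume "u \<in> V - {x}" "w \<in> V - {x}"
    then show "(u, w) \<in> (adj_rel (E - {{x, y}}))\<^sup>*"
      using rtrancl_remove_leaf[OF leaf, of u w] reachable[OF simple connected, of u w] y by auto
  qed
  have "0 < card V" "0 < card E"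
    using assms(3) edge finite_vertices[OF simple] finite_edges[OF simple] card_gt_0_iff by blast+
  then show "card (V - {x}) + 1 = card V" "card (E - {{x, y}}) + 1 = card E"
    using assms(3) edge finite_vertices[OF simple] finite_edges[OF simple] by simp_all
  have "x \<in> neighbors E y"
    using edge by (simp add: insert_commute)
  then have "1 \<le> degree E y"
    using degree_eq_card_neighbors[OF simple] finite_neighbors[OF simple]
    by (metis One_nat_def Suc_leI card_gt_0_iff empty_iff)
  then show "degree (E - {{x, y}}) y + 1 = degree E y"
    using degree_Diff_edge[OF finite_edges[OF simple] edge, of y] by simp
qed

text \<open>Otherwise the component of \<open>v0\<close> after deleting the edge would have the odd degree sum
  \<open>1 + 2 (k - 1)\<close>.\<close>
lemma reachable_remove_edge_2_regular:
  assumes simple: "simple_graph V E" and regular: "\<forall>v\<in>V. degree E v = 2" and edge: "{v0, a} \<in> E"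
  shows "(v0, a) \<in> (adj_rel (E - {{v0, a}}))\<^sup>*"
proof (rule ccontr)
  let ?E' = "E - {{v0, a}}"
  let ?R' = "adj_rel ?E'"
  assume not_reach: "(v0, a) \<notin> ?R'\<^sup>*"
  have simple': "simple_graph V ?E'"
    using simple_graph_subset[OF simple] by blast
  have v0: "v0 \<in> V"
    using edge_vertices[OF simple edge] by auto
  define C where "C = ?R'\<^sup>* `` {v0}"
  have closed: "p \<in> C \<longleftrightarrow> q \<in> C" if "{p, q} \<in> ?E'" for p q
  proof -
    have "(p, q) \<in> ?R'" "(q, p) \<in> ?R'"
      using that by (simp_all add: insert_commute)
    then show ?thesis
      unfolding C_def by (meson Image_singleton_iff rtrancl.rtrancl_into_rtrancl)
  qed
  have "C \<subseteq> V"
  proof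
    fix w assume "w \<in> C"
    then have "(v0, w) \<in> ?R'\<^sup>*"
      by (simp add: C_def)
    then show "w \<in> V"
    proof (induction rule: rtrancl_induct)
      case (step y z)
      then show ?case
        using edge_vertices[OF simple'] by auto
    qed (fact v0)
  qed
  then have finite_C: "finite C"
    using finite_vertices[OF simple] finite_subset by blast
  have "even (card (e \<inter> C))" if e: "e \<in> ?E'" for e
  proof -
    obtain p q where "e = {p, q}" "p \<noteq> q"
      using edgeE[OF simple' e] by metis
    then show ?thesis
      using closed[of p q] e by (cases "p \<in> C") auto
  qed
  then have "even (\<Sum>e\<in>?E'. card (e \<inter> C))"
    by (rule dvd_sum)
  then have "even (\<Sum>w\<in>C. degree ?E' w)"
    using handshake_on[OF simple' finite_C] by simp
  moreover have "degree ?E' w = (if w = v0 then 1 else 2)" if "w \<in> C" for w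
  proof -
    have "w \<in> V" "w \<noteq> a"
      using that \<open>C \<subseteq> V\<close> not_reach by (auto simp: C_def)
    then show ?thesis
      using degree_Diff_edge[OF finite_edges[OF simple] edge, of w] regular by auto
  qed
  moreover have "v0 \<in> C"
    by (simp add: C_def)
  ultimately have "even (1 + 2 * card (C - {v0}))"
    using finite_C by (simp add: sum.remove)
  then show False
    by simp
qed

lemma connected_remove_edge_2_regular:
  assumes simple: "simple_graph V E" and connected: "connected_graph V E"
    and regular: "\<forall>v\<in>V. degree E v = 2" and edge: "{v0, a} \<in> E"
  shows "connected_graph V (E - {{v0, a}})"
proof -
  let ?R' = "adj_rel (E - {{v0, a}})"
  have reach: "(v0, a) \<in> ?R'\<^sup>*"
    by (rule reachable_remove_edge_2_regular[OF simple regular edge])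
  have reach_back: "(a, v0) \<in> ?R'\<^sup>*"
    using reach sym_rtrancl[OF sym_adj_rel] by (rule symD[rotated])
  have "adj_rel E \<subseteq> ?R'\<^sup>*"
  proof
    fix z assume "z \<in> adj_rel E"
    then obtain p q where z: "z = (p, q)" "{p, q} \<in> E"
      by (auto simp: adj_rel_def)
    show "z \<in> ?R'\<^sup>*"
    proof (cases "{p, q} = {v0, a}")
      case True
      then show ?thesis
        using reach reach_back z by (auto simp: doubleton_eq_iff)
    next
      case False
      then have "(p, q) \<in> ?R'"
        using z(2) unfolding adj_rel_iff by blast
      then show ?thesis
        using z(1) by blast
    qed
  qed
  then have "(adj_rel E)\<^sup>* \<subseteq> ?R'\<^sup>*"
    by (rule rtrancl_subset_rtrancl)
  then show ?thesis
    using connected unfolding connected_graph_def by blast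
qed

lemma path_edges_nth: "Suc i < length xs \<Longrightarrow> {xs ! i, xs ! Suc i} \<in> path_edges xs"
  by (auto simp: path_edges_def)

lemma path_edges_conv_image: "path_edges xs = (\<lambda>i. {xs ! i, xs ! Suc i}) ` {i. Suc i < length xs}"
  by (auto simp: path_edges_def)

lemma path_edges_snoc:
  assumes "xs \<noteq> []"
  shows "path_edges (xs @ [x]) = insert {last xs, x} (path_edges xs)"
proof -
  have indices: "{i. Suc i < length (xs @ [x])} = insert (length xs - 1) {i. Suc i < length xs}"
    using assms by auto
  have last: "{(xs @ [x]) ! (length xs - 1), (xs @ [x]) ! Suc (length xs - 1)} = {last xs, x}"
    using assms by (simp add: nth_append last_conv_nth)
  have "(\<lambda>i. {(xs @ [x]) ! i, (xs @ [x]) ! Suc i}) ` {i. Suc i < length xs} =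
      (\<lambda>i. {xs ! i, xs ! Suc i}) ` {i. Suc i < length xs}"
    by (rule image_cong) (simp_all add: nth_append)
  then show ?thesis
    unfolding path_edges_conv_image indices image_insert last by simp
qed

lemma path_edges_map: "path_edges (map h xs) = (`) h ` path_edges xs"
proof -
  have "(\<lambda>i. {map h xs ! i, map h xs ! Suc i}) ` {i. Suc i < length xs}
      = (\<lambda>i. h ` {xs ! i, xs ! Suc i}) ` {i. Suc i < length xs}"
    by (rule image_cong) auto
  then show ?thesis
    unfolding path_edges_conv_image by (simp add: image_image)
qed

lemma cycle_edges_map: "xs \<noteq> [] \<Longrightarrow> cycle_edges (map h xs) = (`) h ` cycle_edges xs"
  by (simp add: cycle_edges_def path_edges_map hd_map last_map)

lemma path_edges_two: "path_edges [a, b] = {{a, b}}"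
  by (auto simp: path_edges_def)

lemma path_edges_three: "path_edges [a, b, c] = {{a, b}, {b, c}}"
  using path_edges_snoc[of "[a, b]" c] by (simp add: path_edges_two insert_commute)

lemma path_list_of_tree:
  assumes "simple_graph V E" "connected_graph V E" "card E + 1 = card V"
    and "a \<in> V" "b \<in> V" "a \<noteq> b" "degree E a \<le> 1" "degree E b \<le> 1"
    and "\<forall>v\<in>V - {a, b}. degree E v \<le> 2"
  shows "\<exists>xs. distinct xs \<and> hd xs = a \<and> last xs = b \<and> set xs = V \<and> path_edges xs = E"
  using assms
proof (induction "card V" arbitrary: V E b rule: less_induct)
  case less
  note simple = less.prems(1) and connected = less.prems(2)
  have two: "2 \<le> card V"
    using less.prems(4-6) finite_vertices[OF simple]
    by (metis card_2_iff card_mono empty_subsetI insert_subset)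
  have "degree E b = 1"
    using one_le_degree[OF simple connected less.prems(5) two] less.prems(8) by simp
  then obtain y where leaf: "neighbors E b = {y}"
    using degree_oneE[OF simple] by blast
  then have by_edge: "{b, y} \<in> E"
    by auto
  show ?case
  proof (cases "y = a")
    case True
    then have "degree E a = 1"
      using one_le_degree[OF simple connected less.prems(4) two] less.prems(7) by simp
    then have "V = {a, b}"
      using adjacent_leaves[OF simple connected, of a b] by_edge True \<open>degree E b = 1\<close>
      by (simp add: insert_commute)
    moreover from this have "E = {{a, b}}"
      using less.prems(3,6) by_edge True
      by (metis One_nat_def card_1_singleton_iff card_2_iff add_right_cancel insert_commute
          numeral_2_eq_2 one_add_one singletonD)
    ultimately show ?thesis
      using less.prems(6) by (intro exI[of _ "[a, b]"]) (auto simp: path_edges_def)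
  next
    case False
    let ?V = "V - {b}" and ?E = "E - {{b, y}}"
    have "V \<noteq> {b}"
      using less.prems(4,6) by blast
    note smaller = remove_leaf[OF simple connected less.prems(5) this leaf]
    have degree_le: "degree ?E v \<le> degree E v" for v
      using degree_Diff_le[OF finite_edges[OF simple]] .
    have "\<exists>xs. distinct xs \<and> hd xs = a \<and> last xs = y \<and> set xs = ?V \<and> path_edges xs = ?E"
    proof (rule less.hyps)
      show "card ?V < card V" "card ?E + 1 = card ?V"
        using smaller(4,5) less.prems(3) by linarith+
      show "a \<in> ?V" "a \<noteq> y"
        using less.prems(4,6) False by auto
      have "degree E y \<le> 2"
        using less.prems(9) smaller(3) False by blast
      then show "degree ?E y \<le> 1"
        using smaller(6) by linarith
      show "degree ?E a \<le> 1"
        using less.prems(7) degree_le[of a] by linarith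
      show "\<forall>v\<in>?V - {a, y}. degree ?E v \<le> 2"
      proof
        fix v assume "v \<in> ?V - {a, y}"
        then have "degree E v \<le> 2"
          using less.prems(9) by blast
        then show "degree ?E v \<le> 2"
          using degree_le[of v] by linarith
      qed
    qed (fact smaller)+
    then obtain xs where xs: "distinct xs" "hd xs = a" "last xs = y" "set xs = ?V"
        "path_edges xs = ?E"
      by blast
    have "a \<in> set xs"
      using xs(4) less.prems(4,6) by blast
    then have "xs \<noteq> []"
      by auto
    have "path_edges (xs @ [b]) = insert {y, b} ?E"
      using path_edges_snoc[OF \<open>xs \<noteq> []\<close>] xs(3,5) by simp
    also have "\<dots> = E"
      using insert_Diff[OF by_edge] by (simp add: insert_commute)
    finally show ?thesis
      using xs \<open>xs \<noteq> []\<close> less.prems(5) by (intro exI[of _ "xs @ [b]"]) auto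
  qed
qed

lemma cycle_list_of_2_regular:
  assumes simple: "simple_graph V E" and "unicyclic V E"
    and regular: "\<forall>v\<in>V. degree E v = 2" and "v0 \<in> V"
  shows "\<exists>cs. distinct cs \<and> 3 \<le> length cs \<and> hd cs = v0 \<and> set cs = V \<and> cycle_edges cs = E"
proof -
  have connected: "connected_graph V E" and card_E: "card E = card V"
    using assms(2) by (auto simp: unicyclic_def)
  have "card (neighbors E v0) = 2"
    using regular assms(4) degree_eq_card_neighbors[OF simple] by simp
  then obtain a where "a \<in> neighbors E v0"
    by (metis card.empty ex_in_conv zero_neq_numeral)
  then have edge: "{v0, a} \<in> E"
    by simp
  let ?E = "E - {{v0, a}}"
  have "a \<in> V" "a \<noteq> v0"
    using edge_vertices[OF simple edge] edge_distinct[OF simple edge] by auto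
  have "card (insert v0 (neighbors E v0)) = 3"
    using \<open>card (neighbors E v0) = 2\<close> not_mem_neighbors_self[OF simple] finite_neighbors[OF simple]
    by simp
  moreover have "insert v0 (neighbors E v0) \<subseteq> V"
    using assms(4) neighbors_subset[OF simple] by auto
  ultimately have three: "3 \<le> card V"
    using finite_vertices[OF simple] by (metis card_mono)
  have "degree ?E v0 \<le> 1" "degree ?E a \<le> 1"
    using degree_Diff_edge[OF finite_edges[OF simple] edge] regular assms(4) \<open>a \<in> V\<close> by auto
  moreover have "\<forall>v\<in>V - {v0, a}. degree ?E v \<le> 2"
    using degree_Diff_le[OF finite_edges[OF simple]] regular by (metis DiffD1)
  moreover have "card ?E + 1 = card V"
    using card_E edge finite_edges[OF simple] three by simp
  ultimately obtain xs where xs: "distinct xs" "hd xs = v0" "last xs = a" "set xs = V"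
      "path_edges xs = ?E"
    using path_list_of_tree[OF simple_graph_subset[OF simple]
        connected_remove_edge_2_regular[OF simple connected regular edge]]
      assms(4) \<open>a \<in> V\<close> \<open>a \<noteq> v0\<close> by (metis Diff_subset)
  have "length xs = card V"
    using xs(1,4) distinct_card by fastforce
  moreover have "cycle_edges xs = E"
    unfolding cycle_edges_def using xs(2,3,5) edge by (auto simp: insert_commute)
  ultimately show ?thesis
    using xs three by auto
qed

lemma nth_ne_hd: "distinct xs \<Longrightarrow> 0 < i \<Longrightarrow> i < length xs \<Longrightarrow> xs ! i \<noteq> hd xs"
  by (metis hd_conv_nth length_greater_0_conv less_nat_zero_code nth_eq_iff_index_eq
      order.strict_trans)

lemma two_le_degree_path_vertex:
  assumes simple: "simple_graph V E" and "path_edges xs \<subseteq> E"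
    and "0 < i" "Suc i < length xs" "xs ! (i - 1) \<noteq> xs ! Suc i"
  shows "2 \<le> degree E (xs ! i)"
proof -
  have "{xs ! (i - 1), xs ! Suc (i - 1)} \<in> E" "{xs ! i, xs ! Suc i} \<in> E"
    using assms(2-4) path_edges_nth[of "i - 1" xs] path_edges_nth[of i xs] by auto
  then have "{xs ! i, xs ! (i - 1)} \<in> E" "{xs ! i, xs ! Suc i} \<in> E"
    using assms(3) by (simp_all add: insert_commute)
  then show ?thesis
    using two_le_degree[OF simple] assms(5) by blast
qed

locale cycle_with_paths =
  fixes V :: "'a set" and E :: "'a set set" and v0 :: 'a
    and cs :: "'a list" and P :: "'a list set"
  assumes distinct_cycle: "distinct cs" and length_cycle: "3 \<le> length cs"
    and hd_cycle: "hd cs = v0" and finite_paths: "finite P"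
    and distinct_path: "p \<in> P \<Longrightarrow> distinct p"
    and length_path: "p \<in> P \<Longrightarrow> 2 \<le> length p"
    and hd_path: "p \<in> P \<Longrightarrow> hd p = v0"
    and path_inter_cycle: "p \<in> P \<Longrightarrow> set p \<inter> set cs = {v0}"
    and path_inter_path: "p \<in> P \<Longrightarrow> q \<in> P \<Longrightarrow> p \<noteq> q \<Longrightarrow> set p \<inter> set q = {v0}"
    and vertices: "V = set cs \<union> \<Union> (set ` P)"
    and edges: "E = cycle_edges cs \<union> \<Union> (path_edges ` P)"
begin

lemma cycle_ne_Nil: "cs \<noteq> []"
  using length_cycle by auto

lemma hub_in_vertices: "v0 \<in> V"
  using vertices hd_cycle cycle_ne_Nil by auto

lemma path_ne_Nil: "p \<in> P \<Longrightarrow> p \<noteq> []"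
  using length_path by fastforce

lemma hub_in_path: "p \<in> P \<Longrightarrow> v0 \<in> set p"
  using hd_path path_ne_Nil hd_in_set by metis

lemma path_nth_ne_hub: "p \<in> P \<Longrightarrow> 0 < i \<Longrightarrow> i < length p \<Longrightarrow> p ! i \<noteq> v0"
  using nth_ne_hd distinct_path hd_path by metis

lemma last_path_ne_hub: "p \<in> P \<Longrightarrow> last p \<noteq> v0"
  using path_nth_ne_hub[of p "length p - 1"] length_path[of p] path_ne_Nil[of p]
  by (simp add: last_conv_nth)

lemma last_path_in_vertices: "p \<in> P \<Longrightarrow> last p \<in> V"
  using vertices path_ne_Nil[of p] by (metis UN_I UnI2 last_in_set)

lemma inj_on_last_path: "inj_on last P"
proof
  fix p q assume "p \<in> P" "q \<in> P" "last p = last q"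
  then show "p = q"
    using path_inter_path[of p q] last_path_ne_hub[of p] path_ne_Nil
    by (metis IntI last_in_set singletonD)
qed

lemma path_edges_subset: "p \<in> P \<Longrightarrow> path_edges p \<subseteq> E"
  using edges by auto

lemma cycle_edges_subset: "path_edges (cs @ [v0]) \<subseteq> E"
  using edges path_edges_snoc[OF cycle_ne_Nil] hd_cycle by (auto simp: cycle_edges_def)

lemma hub_path_edge: "p \<in> P \<Longrightarrow> {v0, p ! 1} \<in> E"
  using path_edges_nth[of 0 p] length_path[of p] path_edges_subset[of p] hd_path[of p] path_ne_Nil[of p]
  by (fastforce simp: hd_conv_nth)

lemma last_path_edge: "p \<in> P \<Longrightarrow> {p ! (length p - 2), last p} \<in> E"
  using path_edges_nth[of "length p - 2" p] length_path[of p] path_edges_subset[of p] path_ne_Nil[of p]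
  by (fastforce simp: last_conv_nth Suc_diff_Suc numeral_2_eq_2)

lemma simple_graph: "simple_graph V E"
  unfolding simple_graph_def
proof (intro conjI ballI)
  show "finite V"
    using vertices finite_paths by simp
  have path_edge: "\<exists>u v. e = {u, v} \<and> u \<noteq> v \<and> u \<in> V \<and> v \<in> V"
    if e: "e \<in> path_edges xs" and xs: "distinct xs" "set xs \<subseteq> V" for e xs
  proof -
    obtain i where "Suc i < length xs" "e = {xs ! i, xs ! Suc i}"
      using e by (auto simp: path_edges_def)
    then show ?thesis
      using xs by (intro exI[of _ "xs ! i"] exI[of _ "xs ! Suc i"]) (auto simp: nth_eq_iff_index_eq)
  qed
  have closing: "last cs \<noteq> hd cs" "last cs \<in> V" "hd cs \<in> V"
    using nth_ne_hd[OF distinct_cycle, of "length cs - 1"] length_cycle cycle_ne_Nil vertices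
    by (auto simp: last_conv_nth)
  fix e assume "e \<in> E"
  then consider "e \<in> path_edges cs" | "e = {last cs, hd cs}" | p where "p \<in> P" "e \<in> path_edges p"
    unfolding edges cycle_edges_def by blast
  then show "\<exists>u v. e = {u, v} \<and> u \<noteq> v \<and> u \<in> V \<and> v \<in> V"
  proof cases
    case 1
    then show ?thesis
      using path_edge[of e cs] distinct_cycle vertices by blast
  next
    case 2
    then show ?thesis
      using closing by blast
  next
    case 3
    then show ?thesis
      using path_edge[of e p] distinct_path[of p] vertices by blast
  qed
qed

lemma two_le_degree_inner:
  assumes "v \<in> V" "v \<noteq> v0" "v \<notin> last ` P"
  shows "2 \<le> degree E v"
proof (cases "v \<in> set cs")
  case True
  then obtain i where i: "i < length cs" "cs ! i = v"
    by (auto simp: in_set_conv_nth)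
  have "0 < i"
    using i assms(2) hd_cycle cycle_ne_Nil by (metis gr0I hd_conv_nth)
  have "(cs @ [v0]) ! (i - 1) \<noteq> (cs @ [v0]) ! Suc i"
  proof (cases "Suc i < length cs")
    case True
    then show ?thesis
      using distinct_cycle \<open>0 < i\<close> by (auto simp: nth_append nth_eq_iff_index_eq)
  next
    case False
    then show ?thesis
      using nth_ne_hd[OF distinct_cycle, of "i - 1"] length_cycle i hd_cycle
      by (simp add: nth_append)
  qed
  then show ?thesis
    using two_le_degree_path_vertex[OF simple_graph cycle_edges_subset, of i] \<open>0 < i\<close> i
    by (simp add: nth_append)
next
  case False
  then obtain p where p: "p \<in> P" "v \<in> set p"
    using assms(1) vertices by auto
  then obtain i where i: "i < length p" "p ! i = v"
    by (auto simp: in_set_conv_nth)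
  have "0 < i"
    using i assms(2) hd_path[OF p(1)] path_ne_Nil[OF p(1)] by (metis gr0I hd_conv_nth)
  moreover have "Suc i < length p"
    using i assms(3) p(1) path_ne_Nil[OF p(1)]
    by (metis Suc_lessI diff_Suc_1 image_eqI last_conv_nth)
  ultimately show ?thesis
    using two_le_degree_path_vertex[OF simple_graph path_edges_subset[OF p(1)], of i] i
      distinct_path[OF p(1)] by (simp add: nth_eq_iff_index_eq)
qed

lemma one_le_degree_last_path: "p \<in> P \<Longrightarrow> 1 \<le> degree E (last p)"
  using last_path_edge[of p] degree_eq_card_neighbors[OF simple_graph] finite_neighbors[OF simple_graph]
  by (metis One_nat_def Suc_leI card_gt_0_iff empty_iff insert_commute mem_neighbors_iff)

lemma hub_degree_ge: "2 + card P \<le> degree E v0"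
proof -
  let ?S = "insert (cs ! 1) (insert (last cs) ((\<lambda>p. p ! 1) ` P))"
  have on_path: "p ! 1 \<in> set p" "p ! 1 \<noteq> v0" if "p \<in> P" for p
    using that length_path[of p] path_nth_ne_hub[of p 1] by auto
  have inj: "inj_on (\<lambda>p. p ! 1) P"
    by (rule inj_onI) (metis IntI on_path path_inter_path singletonD)
  have "cs ! 1 \<noteq> last cs" "cs ! 1 \<noteq> v0" "last cs \<noteq> v0"
    using distinct_cycle length_cycle hd_cycle nth_ne_hd[OF distinct_cycle, of 1]
      nth_ne_hd[OF distinct_cycle, of "length cs - 1"] cycle_ne_Nil
    by (auto simp: last_conv_nth nth_eq_iff_index_eq)
  moreover have "x \<notin> (\<lambda>p. p ! 1) ` P" if "x \<in> set cs" "x \<noteq> v0" for x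
    using that on_path path_inter_cycle by blast
  moreover have "cs ! 1 \<in> set cs" "last cs \<in> set cs"
    using length_cycle cycle_ne_Nil by auto
  ultimately have "card ?S = 2 + card P"
    using card_image[OF inj] finite_paths by simp
  moreover have "?S \<subseteq> neighbors E v0"
  proof -
    have "{v0, cs ! 1} \<in> E"
      using cycle_edges_subset path_edges_nth[of 0 "cs @ [v0]"] length_cycle hd_cycle cycle_ne_Nil
      by (fastforce simp: nth_append hd_conv_nth)
    moreover have "{v0, last cs} \<in> E"
      using cycle_edges_subset path_edges_nth[of "length cs - 1" "cs @ [v0]"] cycle_ne_Nil
      by (fastforce simp: nth_append last_conv_nth insert_commute)
    ultimately show ?thesis
      using hub_path_edge by auto
  qed
  ultimately show ?thesis
    using degree_eq_card_neighbors[OF simple_graph] finite_neighbors[OF simple_graph]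
    by (metis card_mono)
qed

text \<open>The lower bounds above are sharp: with \<open>|E| = |V|\<close> they add up to the degree sum.\<close>
lemma degrees:
  assumes card_edges: "card E = card V"
  shows degree_hub: "degree E v0 = 2 + card P"
    and degree_last_path: "p \<in> P \<Longrightarrow> degree E (last p) = 1"
    and degree_inner: "v \<in> V \<Longrightarrow> v \<noteq> v0 \<Longrightarrow> v \<notin> last ` P \<Longrightarrow> degree E v = 2"
proof -
  define lb where "lb v = (if v = v0 then 2 + card P else if v \<in> last ` P then 1 else 2)" for v
  have ends: "last ` P \<subseteq> V - {v0}"
    using last_path_in_vertices last_path_ne_hub by auto
  have finite: "finite V"
    by (rule finite_vertices[OF simple_graph])
  have le: "lb v \<le> degree E v" if "v \<in> V" for v
    using that hub_degree_ge one_le_degree_last_path two_le_degree_inner by (auto simp: lb_def)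
  have "(\<Sum>v\<in>V - {v0}. lb v) = (\<Sum>v\<in>V - {v0} - last ` P. lb v) + (\<Sum>v\<in>last ` P. lb v)"
    using ends finite by (intro sum.subset_diff) auto
  also have "\<dots> = (\<Sum>v\<in>V - {v0} - last ` P. 2) + (\<Sum>v\<in>last ` P. 1)"
    using last_path_ne_hub by (intro arg_cong2[where f = "(+)"] sum.cong) (auto simp: lb_def)
  also have "\<dots> = 2 * card (V - {v0} - last ` P) + card (last ` P)"
    by simp
  also have "card (V - {v0} - last ` P) = card V - 1 - card P"
    using ends finite hub_in_vertices card_image[OF inj_on_last_path] finite_paths
    by (simp add: card_Diff_subset)
  finally have "(\<Sum>v\<in>V - {v0}. lb v) = 2 * (card V - 1 - card P) + card P"
    using card_image[OF inj_on_last_path] by simp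
  moreover have "card P \<le> card V - 1"
    using card_mono[OF _ ends] finite hub_in_vertices card_image[OF inj_on_last_path] by simp
  moreover have "(\<Sum>v\<in>V. lb v) = lb v0 + (\<Sum>v\<in>V - {v0}. lb v)"
    using finite hub_in_vertices by (rule sum.remove)
  moreover have "0 < card V"
    using finite hub_in_vertices card_gt_0_iff by blast
  ultimately have "(\<Sum>v\<in>V. lb v) = 2 * card V"
    by (simp add: lb_def)
  then have "(\<Sum>v\<in>V. lb v) = (\<Sum>v\<in>V. degree E v)"
    using handshake[OF simple_graph] card_edges by simp
  then have eq: "lb v = degree E v" if "v \<in> V" for v
    by (rule sum_mono_inv[of lb V "degree E" v]) (use le that finite in auto)
  show "degree E v0 = 2 + card P"
    using eq[OF hub_in_vertices] by (simp add: lb_def)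
  show "degree E (last p) = 1" if "p \<in> P"
    using that eq[of "last p"] last_path_in_vertices last_path_ne_hub by (simp add: lb_def)
  show "degree E v = 2" if "v \<in> V" "v \<noteq> v0" "v \<notin> last ` P"
    using that eq[of v] by (simp add: lb_def)
qed

lemma pendant_neighbors_hub:
  assumes "card E = card V"
  shows "pendant_neighbors E v0 = last ` {p \<in> P. length p = 2}"
proof (intro set_eqI iffI)
  fix u assume "u \<in> pendant_neighbors E v0"
  then have u: "{v0, u} \<in> E" "degree E u = 1"
    by (auto simp: pendant_neighbors_def)
  then have "u \<in> V" "u \<noteq> v0"
    using edge_vertices[OF simple_graph] edge_distinct[OF simple_graph] by blast+
  then obtain p where p: "p \<in> P" "u = last p"
    using degree_inner[OF assms] u(2) by force
  have "length p = 2"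
  proof (rule ccontr)
    assume "length p \<noteq> 2"
    then have "p ! (length p - 2) \<noteq> v0"
      using path_nth_ne_hub[OF p(1), of "length p - 2"] length_path[OF p(1)] by simp
    moreover have "{p ! (length p - 2), u} \<in> E"
      using last_path_edge[OF p(1)] p(2) by blast
    then have "{u, p ! (length p - 2)} \<in> E"
      by (metis insert_commute)
    moreover have "{u, v0} \<in> E"
      using u(1) by (metis insert_commute)
    ultimately have "2 \<le> degree E u"
      using two_le_degree[OF simple_graph] by metis
    then show False
      using u(2) by simp
  qed
  then show "u \<in> last ` {p \<in> P. length p = 2}"
    using p by blast
next
  fix u assume "u \<in> last ` {p \<in> P. length p = 2}"
  then obtain p where p: "p \<in> P" "length p = 2" "u = last p"
    by blast
  then have "{v0, u} \<in> E"
    using hub_path_edge[OF p(1)] path_ne_Nil[OF p(1)] by (simp add: last_conv_nth)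
  then show "u \<in> pendant_neighbors E v0"
    using degree_last_path[OF assms p(1)] p(3) by (simp add: pendant_neighbors_def)
qed

lemma card_pendant_neighbors_hub:
  "card E = card V \<Longrightarrow> card (pendant_neighbors E v0) = card {p \<in> P. length p = 2}"
  using pendant_neighbors_hub inj_on_subset[OF inj_on_last_path] by (simp add: card_image)


lemma card_vertices: "card V = length cs + (\<Sum>p\<in>P. length p - 1)"
proof -
  have "V = set cs \<union> (\<Union>p\<in>P. set p - {v0})"
    using vertices hub_in_path hd_cycle cycle_ne_Nil by auto
  moreover have "set cs \<inter> (\<Union>p\<in>P. set p - {v0}) = {}"
    using path_inter_cycle by blast
  moreover have "card (\<Union>p\<in>P. set p - {v0}) = (\<Sum>p\<in>P. card (set p - {v0}))"
    using finite_paths path_inter_path by (intro card_UN_disjoint) blast+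
  moreover have "card (set p - {v0}) = length p - 1" if "p \<in> P" for p
    using that hub_in_path distinct_path by (simp add: distinct_card)
  ultimately show ?thesis
    using distinct_card[OF distinct_cycle] finite_paths by (simp add: card_Un_disjoint)
qed

lemma inj_image:
  assumes "inj_on h V"
  shows "cycle_with_paths (h ` V) ((`) h ` E) (h v0) (map h cs) (map h ` P)"
proof -
  have sub: "set cs \<subseteq> V" "p \<in> P \<Longrightarrow> set p \<subseteq> V" for p
    using vertices by auto
  have image_Int: "h ` (A \<inter> B) = h ` A \<inter> h ` B" if "A \<subseteq> V" "B \<subseteq> V" for A B
    using inj_on_image_Int[OF assms that] .
  show ?thesis
  proof unfold_locales
    show "distinct (map h cs)"
      using distinct_cycle sub(1) inj_on_subset[OF assms] by (simp add: distinct_map)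
    show "hd (map h cs) = h v0"
      using hd_cycle cycle_ne_Nil by (simp add: hd_map)
    fix p assume "p \<in> map h ` P"
    then obtain p' where p': "p' \<in> P" "p = map h p'"
      by blast
    then show "distinct p"
      using distinct_path sub(2) inj_on_subset[OF assms] by (simp add: distinct_map)
    show "2 \<le> length p" "hd p = h v0"
      using p' length_path hd_path path_ne_Nil by (simp_all add: hd_map)
    have "set p \<inter> set (map h cs) = h ` (set p' \<inter> set cs)"
      using p' image_Int sub by simp
    then show "set p \<inter> set (map h cs) = {h v0}"
      using path_inter_cycle[OF p'(1)] by simp
    fix q assume "q \<in> map h ` P" "p \<noteq> q"
    then obtain q' where "q' \<in> P" "q = map h q'" "p' \<noteq> q'"
      using p' by blast
    moreover have "set p \<inter> set q = h ` (set p' \<inter> set q')"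
      using p' \<open>q' \<in> P\<close> \<open>q = map h q'\<close> image_Int sub by simp
    ultimately show "set p \<inter> set q = {h v0}"
      using path_inter_path[OF p'(1)] by simp
  next
    show "h ` V = set (map h cs) \<union> \<Union> (set ` map h ` P)"
      unfolding vertices by (simp add: image_Un image_UN)
    show "(`) h ` E = cycle_edges (map h cs) \<union> \<Union> (path_edges ` map h ` P)"
      unfolding edges using cycle_ne_Nil by (simp add: image_Un image_UN cycle_edges_map path_edges_map)
  qed (use finite_paths length_cycle in simp_all)
qed

lemma lengths_if_card_le:
  assumes "card V \<le> 3 + card {p \<in> P. length p = 2} + 2 * card {p \<in> P. length p \<noteq> 2}"
  shows "length cs = 3" and "p \<in> P \<Longrightarrow> length p \<le> 3"
proof -
  let ?P2 = "{p \<in> P. length p = 2}" and ?P3 = "{p \<in> P. length p \<noteq> 2}"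
  have "(\<Sum>p\<in>P. length p - 1) = (\<Sum>p\<in>?P2. length p - 1) + (\<Sum>p\<in>?P3. length p - 1)"
    using finite_paths by (subst sum.union_disjoint[symmetric]) (auto intro: sum.cong)
  also have "(\<Sum>p\<in>?P2. length p - 1) = card ?P2"
    by simp
  also have "(\<Sum>p\<in>?P3. length p - 1) = (\<Sum>p\<in>?P3. 2 + (length p - 3))"
    using length_path by (intro sum.cong) fastforce+
  also have "\<dots> = (\<Sum>p\<in>?P3. 2) + (\<Sum>p\<in>?P3. length p - 3)"
    by (rule sum.distrib)
  finally have "card V = length cs + card ?P2 + 2 * card ?P3 + (\<Sum>p\<in>?P3. length p - 3)"
    using card_vertices by (simp add: mult.commute)
  then have "length cs = 3" "(\<Sum>p\<in>?P3. length p - 3) = 0"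
    using assms length_cycle by linarith+
  then show "length cs = 3" "p \<in> P \<Longrightarrow> length p \<le> 3"
    using finite_paths by auto
qed

end

lemma cycle_with_paths_add_path:
  assumes "cycle_with_paths V E v0 cs P" "x \<notin> V"
  shows "cycle_with_paths (insert x V) (insert {v0, x} E) v0 cs (insert [v0, x] P)"
proof -
  interpret cycle_with_paths V E v0 cs P
    by fact
  have fresh: "x \<notin> set cs" "\<And>q. q \<in> P \<Longrightarrow> x \<notin> set q" "x \<noteq> v0"
    using assms(2) vertices hub_in_vertices by auto
  have "v0 \<in> set cs"
    using hd_cycle cycle_ne_Nil by auto
  show ?thesis
  proof unfold_locales
    show "finite (insert [v0, x] P)"
      using finite_paths by simp
    fix p assume p: "p \<in> insert [v0, x] P"
    have "distinct p \<and> 2 \<le> length p \<and> hd p = v0 \<and> set p \<inter> set cs = {v0}"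
    proof (cases "p = [v0, x]")
      case False
      then have "p \<in> P"
        using p by simp
      then show ?thesis
        using distinct_path length_path hd_path path_inter_cycle by blast
    qed (use fresh \<open>v0 \<in> set cs\<close> in auto)
    then show "distinct p" "2 \<le> length p" "hd p = v0" "set p \<inter> set cs = {v0}"
      by auto
    have new_meet: "set [v0, x] \<inter> set q = {v0}" if "q \<in> P" for q
      using fresh(2)[OF that] hub_in_path[OF that] by auto
    fix q assume "q \<in> insert [v0, x] P" "p \<noteq> q"
    then show "set p \<inter> set q = {v0}"
      using p new_meet path_inter_path by (metis Int_commute insertE)
  next
    show "insert x V = set cs \<union> \<Union> (set ` insert [v0, x] P)"
      using vertices hub_in_vertices by auto
    show "insert {v0, x} E = cycle_edges cs \<union> \<Union> (path_edges ` insert [v0, x] P)"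
      using edges by (auto simp: path_edges_def)
  qed (fact distinct_cycle length_cycle hd_cycle)+
qed

lemma UN_image_remove: "a \<in> A \<Longrightarrow> \<Union> (f ` A) = f a \<union> \<Union> (f ` (A - {a}))"
  by (metis Union_insert image_insert insert_Diff)

lemma cycle_with_paths_extend_path:
  assumes "cycle_with_paths V E v0 cs P" "p \<in> P" "x \<notin> V"
  shows "cycle_with_paths (insert x V) (insert {last p, x} E) v0 cs (insert (p @ [x]) (P - {p}))"
proof -
  interpret cycle_with_paths V E v0 cs P
    by fact
  have fresh: "x \<notin> set cs" "\<And>q. q \<in> P \<Longrightarrow> x \<notin> set q"
    using assms(3) vertices by auto
  have p: "distinct (p @ [x])" "2 \<le> length (p @ [x])" "hd (p @ [x]) = v0"
      "set (p @ [x]) \<inter> set cs = {v0}"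
    using fresh distinct_path[OF assms(2)] length_path[OF assms(2)] hd_path[OF assms(2)]
      path_inter_cycle[OF assms(2)] path_ne_Nil[OF assms(2)] fresh(2)[OF assms(2)] by auto
  have meet: "set (p @ [x]) \<inter> set q = {v0}" if "q \<in> P" "q \<noteq> p" for q
    using that assms(2) path_inter_path[of p q] fresh(2)[of q] by auto
  show ?thesis
  proof unfold_locales
    show "finite (insert (p @ [x]) (P - {p}))"
      using finite_paths by simp
    fix r assume r: "r \<in> insert (p @ [x]) (P - {p})"
    have "distinct r \<and> 2 \<le> length r \<and> hd r = v0 \<and> set r \<inter> set cs = {v0}"
    proof (cases "r = p @ [x]")
      case False
      then have "r \<in> P"
        using r by simp
      then show ?thesis
        using distinct_path length_path hd_path path_inter_cycle by blast
    qed (use p in auto)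
    then show "distinct r" "2 \<le> length r" "hd r = v0" "set r \<inter> set cs = {v0}"
      by auto
    fix q assume "q \<in> insert (p @ [x]) (P - {p})" "r \<noteq> q"
    then show "set r \<inter> set q = {v0}"
      using r meet path_inter_path by (metis DiffE Int_commute insertE singletonI)
  next
    have "\<Union> (set ` P) = set p \<union> \<Union> (set ` (P - {p}))"
      using UN_image_remove[OF assms(2)] .
    then show "insert x V = set cs \<union> \<Union> (set ` insert (p @ [x]) (P - {p}))"
      unfolding vertices by auto
    have "\<Union> (path_edges ` P) = path_edges p \<union> \<Union> (path_edges ` (P - {p}))"
      using UN_image_remove[OF assms(2)] .
    moreover have "path_edges (p @ [x]) = insert {last p, x} (path_edges p)"
      using path_edges_snoc[OF path_ne_Nil[OF assms(2)]] .
    ultimately show "insert {last p, x} E = cycle_edges cs \<union> \<Union> (path_edges ` insert (p @ [x]) (P - {p}))"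
      unfolding edges by auto
  qed (fact distinct_cycle length_cycle hd_cycle)+
qed

lemma cycle_with_paths_of_2_regular:
  assumes simple: "simple_graph V E" and unicyclic: "unicyclic V E" and "v0 \<in> V"
    and regular: "\<forall>v\<in>V - {v0}. degree E v = 2"
  shows "\<exists>cs. cycle_with_paths V E v0 cs {}"
proof -
  have finite: "finite V"
    by (rule finite_vertices[OF simple])
  have "(\<Sum>v\<in>V. degree E v) = degree E v0 + 2 * (card V - 1)"
    using regular finite assms(3) by (simp add: sum.remove)
  moreover have "0 < card V"
    using finite assms(3) card_gt_0_iff by blast
  ultimately have "degree E v0 = 2"
    using handshake[OF simple] unicyclic by (cases "card V") (auto simp: unicyclic_def)
  then have "\<forall>v\<in>V. degree E v = 2"
    using regular by blast
  then obtain cs where "distinct cs" "3 \<le> length cs" "hd cs = v0" "set cs = V" "cycle_edges cs = E"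
    using cycle_list_of_2_regular[OF simple unicyclic _ assms(3)] by blast
  then have "cycle_with_paths V E v0 cs {}"
    by unfold_locales auto
  then show ?thesis
    by blast
qed

lemma cycle_with_paths_insert_leaf:
  assumes decomposition: "cycle_with_paths (V - {x}) (E - {{x, y}}) v0 cs P"
    and "x \<in> V" "{x, y} \<in> E" "y = v0 \<or> y \<in> last ` P"
  shows "\<exists>cs P. cycle_with_paths V E v0 cs P"
proof -
  have V: "insert x (V - {x}) = V" and E: "insert {x, y} (E - {{x, y}}) = E"
    using assms(2,3) by auto
  have "x \<notin> V - {x}"
    by simp
  from assms(4) show ?thesis
  proof
    assume "y = v0"
    then show ?thesis
      using cycle_with_paths_add_path[OF decomposition \<open>x \<notin> V - {x}\<close>] V E
      by (metis insert_commute)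
  next
    assume "y \<in> last ` P"
    then obtain p where "p \<in> P" "y = last p"
      by blast
    then show ?thesis
      using cycle_with_paths_extend_path[OF decomposition \<open>p \<in> P\<close> \<open>x \<notin> V - {x}\<close>] V E
      by (metis insert_commute)
  qed
qed

lemma cycle_with_paths_exists:
  assumes "simple_graph V E" "unicyclic V E" "v0 \<in> V" "\<forall>v\<in>V - {v0}. degree E v \<le> 2"
  shows "\<exists>cs P. cycle_with_paths V E v0 cs P"
  using assms
proof (induction "card V" arbitrary: V E rule: less_induct)
  case less
  note simple = less.prems(1) and v0 = less.prems(3) and low = less.prems(4)
  have connected: "connected_graph V E" and card_E: "card E = card V"
    using less.prems(2) by (auto simp: unicyclic_def)
  show ?case
  proof (cases "\<forall>v\<in>V - {v0}. degree E v = 2")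
    case True
    then show ?thesis
      using cycle_with_paths_of_2_regular[OF simple less.prems(2) v0] by blast
  next
    case False
    then obtain x where x: "x \<in> V" "x \<noteq> v0" "degree E x \<noteq> 2"
      by blast
    then have "2 \<le> card V"
      using v0 finite_vertices[OF simple] by (metis card_2_iff card_mono empty_subsetI insert_subset)
    then have "degree E x = 1"
      using one_le_degree[OF simple connected x(1)] low x by force
    then obtain y where leaf: "neighbors E x = {y}"
      using degree_oneE[OF simple] by blast
    then have edge: "{x, y} \<in> E"
      by auto
    let ?V = "V - {x}" and ?E = "E - {{x, y}}"
    have "V \<noteq> {x}"
      using v0 x(2) by blast
    note smaller = remove_leaf[OF simple connected x(1) this leaf]
    have degree_le: "degree ?E v \<le> degree E v" for v
      using degree_Diff_le[OF finite_edges[OF simple]] .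
    have "\<exists>cs P. cycle_with_paths ?V ?E v0 cs P"
    proof (rule less.hyps)
      show "card ?V < card V"
        using smaller(4) by linarith
      show "unicyclic ?V ?E"
        using smaller(2,4,5) card_E by (simp add: unicyclic_def)
      show "v0 \<in> ?V"
        using v0 x(2) by simp
      show "\<forall>v\<in>?V - {v0}. degree ?E v \<le> 2"
      proof
        fix v assume "v \<in> ?V - {v0}"
        then have "degree E v \<le> 2"
          using low by blast
        then show "degree ?E v \<le> 2"
          using degree_le[of v] by linarith
      qed
    qed (fact smaller)
    then obtain cs P where decomposition: "cycle_with_paths ?V ?E v0 cs P"
      by blast
    have "y \<in> last ` P" if "y \<noteq> v0"
    proof -
      have "degree E y \<le> 2"
        using low smaller(3) that by blast
      then have "degree ?E y \<le> 1"
        using smaller(6) by linarith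
      then show ?thesis
        using cycle_with_paths.two_le_degree_inner[OF decomposition smaller(3) that] by linarith
    qed
    then show ?thesis
      using cycle_with_paths_insert_leaf[OF decomposition x(1) edge] by blast
  qed
qed

definition pendant_gap :: real where
  "pendant_gap = sqrt 8 - sqrt 5"

definition hub_gain :: "nat \<Rightarrow> real" where
  "hub_gain d = sqrt (real d ^ 2 + 4) - sqrt 8"

definition pendant_hub_gain :: "nat \<Rightarrow> real" where
  "pendant_hub_gain d = sqrt (real d ^ 2 + 1) - sqrt (real d ^ 2 + 4) + pendant_gap"

definition degree_share :: "nat \<Rightarrow> real" where
  "degree_share d = (if d = 1 then - pendant_gap else if d = 2 then 0 else pendant_gap)"

lemma pendant_gap_pos: "0 < pendant_gap"
  by (simp add: pendant_gap_def)

lemma sqrt_sum_squares_mono: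
  fixes a b x y :: nat
  assumes "a \<le> x" "b \<le> y"
  shows "sqrt (real a ^ 2 + real b ^ 2) \<le> sqrt (real x ^ 2 + real y ^ 2)"
  using assms by (intro real_sqrt_le_mono add_mono power_mono) simp_all

lemma sqrt_13_add_sqrt_5: "2 * sqrt 8 \<le> sqrt 13 + sqrt 5"
proof (rule power2_le_imp_le)
  have "7 \<le> sqrt 65"
    by (rule real_le_rsqrt) simp
  then show "(2 * sqrt 8)\<^sup>2 \<le> (sqrt 13 + sqrt 5)\<^sup>2"
    by (simp add: power2_sum power_mult_distrib flip: real_sqrt_mult)
qed simp

lemma sqrt_18_add_sqrt_5: "3 * sqrt 8 \<le> sqrt 18 + 2 * sqrt 5"
proof (rule power2_le_imp_le)
  have "17 \<le> sqrt 360"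
    by (rule real_le_rsqrt) simp
  moreover have "sqrt 360 = 2 * sqrt 90"
    using real_sqrt_mult[of 4 90] by simp
  ultimately show "(3 * sqrt 8)\<^sup>2 \<le> (sqrt 18 + 2 * sqrt 5)\<^sup>2"
    by (simp add: power2_sum power_mult_distrib algebra_simps flip: real_sqrt_mult)
qed simp

lemma pendant_hub_gain_pos:
  assumes "3 \<le> d"
  shows "0 < pendant_hub_gain d"
proof -
  define t where "t = real d ^ 2"
  have "9 \<le> t"
    using power_mono[of 3 "real d" 2] assms by (simp add: t_def)
  then have "sqrt (t + 4) * sqrt 5 < sqrt (t + 1) * sqrt 8"
    unfolding real_sqrt_mult[symmetric] by simp
  moreover have "(sqrt (t + 4) + sqrt 5)\<^sup>2 = t + 9 + 2 * (sqrt (t + 4) * sqrt 5)"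
    "(sqrt (t + 1) + sqrt 8)\<^sup>2 = t + 9 + 2 * (sqrt (t + 1) * sqrt 8)"
    using \<open>9 \<le> t\<close> by (simp_all add: power2_sum)
  ultimately have "(sqrt (t + 4) + sqrt 5)\<^sup>2 < (sqrt (t + 1) + sqrt 8)\<^sup>2"
    by simp
  then have "sqrt (t + 4) + sqrt 5 < sqrt (t + 1) + sqrt 8"
    by (rule power_less_imp_less_base) (use \<open>9 \<le> t\<close> in simp)
  then show ?thesis
    by (simp add: pendant_hub_gain_def pendant_gap_def flip: t_def)
qed

lemma degree_share_le_edge_excess:
  fixes x y :: nat
  assumes "1 \<le> x" "1 \<le> y" "3 \<le> x + y"
  shows "degree_share x + degree_share y \<le> sqrt (real x ^ 2 + real y ^ 2) - sqrt 8"
    and "x \<le> 2 \<Longrightarrow> y \<le> 2 \<Longrightarrow>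
      degree_share x + degree_share y = sqrt (real x ^ 2 + real y ^ 2) - sqrt 8"
proof -
  show "degree_share x + degree_share y = sqrt (real x ^ 2 + real y ^ 2) - sqrt 8"
    if le2: "x \<le> 2" "y \<le> 2"
  proof -
    consider "x = 1" "y = 2" | "x = 2" "y = 1" | "x = 2" "y = 2"
      using le2 assms by linarith
    then show ?thesis
      by cases (simp_all add: degree_share_def pendant_gap_def)
  qed
  show "degree_share x + degree_share y \<le> sqrt (real x ^ 2 + real y ^ 2) - sqrt 8"
    using assms
  proof (induction x y rule: linorder_wlog)
    case (le x y)
    consider "x = 1" "y = 2" | "x = 2" "y = 2" | "x = 1" "3 \<le> y" | "x = 2" "3 \<le> y" | "3 \<le> x"
      using le by linarith
    then show ?case
    proof cases
      case 3
      then show ?thesis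
        using sqrt_sum_squares_mono[of 1 1 3 y] by (simp add: degree_share_def)
    next
      case 4
      then have "sqrt 13 \<le> sqrt (real x ^ 2 + real y ^ 2)"
        using sqrt_sum_squares_mono[of 2 x 3 y] by simp
      moreover have "degree_share x = 0" "degree_share y = pendant_gap"
        using 4 by (simp_all add: degree_share_def)
      ultimately show ?thesis
        using sqrt_13_add_sqrt_5 unfolding pendant_gap_def by linarith
    next
      case 5
      then have "sqrt 18 \<le> sqrt (real x ^ 2 + real y ^ 2)"
        using sqrt_sum_squares_mono[of 3 x 3 y] le.hyps by simp
      moreover have "degree_share x = pendant_gap" "degree_share y = pendant_gap"
        using 5 le.hyps by (simp_all add: degree_share_def)
      ultimately show ?thesis
        using sqrt_18_add_sqrt_5 unfolding pendant_gap_def by linarith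
    qed (simp_all add: degree_share_def pendant_gap_def)
  qed (simp add: add.commute)
qed

lemma hub_gain_le_edge_excess:
  fixes d y :: nat
  assumes "1 \<le> y"
  shows "hub_gain d + (if y = 1 then pendant_hub_gain d - pendant_gap else 0)
      \<le> sqrt (real d ^ 2 + real y ^ 2) - sqrt 8"
    and "y \<le> 2 \<Longrightarrow> hub_gain d + (if y = 1 then pendant_hub_gain d - pendant_gap else 0)
      = sqrt (real d ^ 2 + real y ^ 2) - sqrt 8"
proof -
  show eq: "hub_gain d + (if y = 1 then pendant_hub_gain d - pendant_gap else 0)
      = sqrt (real d ^ 2 + real y ^ 2) - sqrt 8" if y2: "y \<le> 2"
  proof -
    consider "y = 1" | "y = 2"
      using y2 assms by linarith
    then show ?thesis
      by cases (simp_all add: hub_gain_def pendant_hub_gain_def)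
  qed
  show "hub_gain d + (if y = 1 then pendant_hub_gain d - pendant_gap else 0)
      \<le> sqrt (real d ^ 2 + real y ^ 2) - sqrt 8"
  proof (cases "y \<le> 2")
    case True
    then show ?thesis
      using eq by linarith
  next
    case False
    then show ?thesis
      using sqrt_sum_squares_mono[of d d 2 y] by (simp add: hub_gain_def)
  qed
qed

locale unicyclic_hub =
  fixes V :: "'a set" and E :: "'a set set" and v0 :: 'a
  assumes simple: "simple_graph V E" and unicyclic: "unicyclic V E"
    and hub_in_vertices: "v0 \<in> V" and three_le_hub_degree: "3 \<le> degree E v0"
begin

lemma connected: "connected_graph V E"
  using unicyclic by (simp add: unicyclic_def)

lemma card_edges: "card E = card V"
  using unicyclic by (simp add: unicyclic_def)

lemma finite_V: "finite V"
  by (rule finite_vertices[OF simple])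

lemma finite_E: "finite E"
  by (rule finite_edges[OF simple])

lemma four_le_card: "4 \<le> card V"
proof -
  have "card (insert v0 (neighbors E v0)) = Suc (degree E v0)"
    using not_mem_neighbors_self[OF simple] finite_neighbors[OF simple]
      degree_eq_card_neighbors[OF simple] by simp
  moreover have "insert v0 (neighbors E v0) \<subseteq> V"
    using hub_in_vertices neighbors_subset[OF simple] by blast
  then have "card (insert v0 (neighbors E v0)) \<le> card V"
    by (rule card_mono[OF finite_V])
  ultimately show ?thesis
    using three_le_hub_degree by linarith
qed

lemma degree_pos: "v \<in> V \<Longrightarrow> 1 \<le> degree E v"
  using one_le_degree[OF simple connected] four_le_card by simp

lemma not_adjacent_leaves:
  assumes "{u, w} \<in> E" "degree E u = 1" "degree E w = 1"
  shows False
proof -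
  have "V = {u, w}"
    using adjacent_leaves[OF simple connected assms] .
  then have "card V \<le> 2"
    by (simp add: card_insert_if)
  then show False
    using four_le_card by simp
qed

text \<open>Share of the endpoint \<open>v\<close> in the excess of the edge \<open>e\<close>: the hub takes \<open>hub_gain\<close>,
  every other vertex its \<open>degree_share\<close>, corrected on the edges at the hub.\<close>
definition edge_share :: "'a set \<Rightarrow> 'a \<Rightarrow> real" where
  "edge_share e v =
    (if v = v0 then hub_gain (degree E v0)
     else if degree E v = 1 \<and> v0 \<in> e then pendant_hub_gain (degree E v0) - pendant_gap
     else if 3 \<le> degree E v \<and> v0 \<in> e then 0
     else degree_share (degree E v))"

definition branch_vertices :: "'a set" where
  "branch_vertices = {v \<in> V - {v0}. 3 \<le> degree E v}"

definition vertex_bound :: "'a \<Rightarrow> real" where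
  "vertex_bound v = pendant_gap * (real (degree E v) - 2)
     + (if v \<in> pendant_neighbors E v0 then pendant_hub_gain (degree E v0) else 0)
     + (if 3 \<le> degree E v then pendant_gap else 0)"

lemma edge_share_sum_le:
  assumes "e \<in> E"
  shows "(\<Sum>v\<in>e. edge_share e v) \<le> sqrt (\<Sum>v\<in>e. real (degree E v) ^ 2) - sqrt 8"
    and "\<forall>v\<in>V - {v0}. degree E v \<le> 2 \<Longrightarrow>
      (\<Sum>v\<in>e. edge_share e v) = sqrt (\<Sum>v\<in>e. real (degree E v) ^ 2) - sqrt 8"
proof -
  obtain u w where e: "e = {u, w}" "u \<noteq> w" "u \<in> V" "w \<in> V"
    using edgeE[OF simple assms] by metis
  have at_hub: "(\<Sum>v\<in>{v0, x}. edge_share {v0, x} v) = hub_gain (degree E v0)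
      + (if degree E x = 1 then pendant_hub_gain (degree E v0) - pendant_gap else 0)"
    if "x \<noteq> v0" "1 \<le> degree E x" for x
    using that by (auto simp: edge_share_def degree_share_def)
  have away: "(\<Sum>v\<in>{u, w}. edge_share {u, w} v) = degree_share (degree E u) + degree_share (degree E w)"
    if "u \<noteq> v0" "w \<noteq> v0"
    using that e(2) by (simp add: edge_share_def)
  consider "u = v0" | "w = v0" | "u \<noteq> v0" "w \<noteq> v0"
    by blast
  then have "(\<Sum>v\<in>e. edge_share e v) \<le> sqrt (\<Sum>v\<in>e. real (degree E v) ^ 2) - sqrt 8 \<and>
      ((\<forall>v\<in>V - {v0}. degree E v \<le> 2) \<longrightarrow>
        (\<Sum>v\<in>e. edge_share e v) = sqrt (\<Sum>v\<in>e. real (degree E v) ^ 2) - sqrt 8)"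
  proof cases
    case 1
    then show ?thesis
      using e at_hub[of w] degree_pos[OF e(4)] hub_gain_le_edge_excess[OF degree_pos[OF e(4)], of "degree E v0"] by auto
  next
    case 2
    then have "e = {v0, u}"
      using e(1) by auto
    then show ?thesis
      using 2 e at_hub[of u] degree_pos[OF e(3)] hub_gain_le_edge_excess[OF degree_pos[OF e(3)], of "degree E v0"] by auto
  next
    case 3
    have "degree E u \<noteq> 1 \<or> degree E w \<noteq> 1"
      using not_adjacent_leaves[of u w] e(1) assms by blast
    then have "3 \<le> degree E u + degree E w"
      using degree_pos[OF e(3)] degree_pos[OF e(4)] by linarith
    then show ?thesis
      using 3 e away degree_share_le_edge_excess[OF degree_pos[OF e(3)] degree_pos[OF e(4)]] by auto
  qed
  then show "(\<Sum>v\<in>e. edge_share e v) \<le> sqrt (\<Sum>v\<in>e. real (degree E v) ^ 2) - sqrt 8"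
    and "\<forall>v\<in>V - {v0}. degree E v \<le> 2 \<Longrightarrow>
      (\<Sum>v\<in>e. edge_share e v) = sqrt (\<Sum>v\<in>e. real (degree E v) ^ 2) - sqrt 8"
    by auto
qed

end

definition U_Delta_sombor :: "nat \<Rightarrow> nat \<Rightarrow> real" where
  "U_Delta_sombor n d =
    real d * sqrt (real d ^ 2 + 4) + sqrt 8 * (real n - 2 * real d + 2) + sqrt 5 * (real d - 2)"

context unicyclic_hub
begin

lemma pendant_neighbors_subset: "pendant_neighbors E v0 \<subseteq> V - {v0}"
  using edge_vertices[OF simple] not_mem_neighbors_self[OF simple]
  by (auto simp: pendant_neighbors_def)

lemma share_sum_hub:
  "(\<Sum>e\<in>{e \<in> E. v0 \<in> e}. edge_share e v0) = real (degree E v0) * hub_gain (degree E v0)"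
  by (simp add: edge_share_def degree_def)

lemma vertex_bound_le_share_sum:
  assumes "v \<in> V" "v \<noteq> v0"
  shows "vertex_bound v \<le> (\<Sum>e\<in>{e \<in> E. v \<in> e}. edge_share e v)"
    and "degree E v \<le> 2 \<Longrightarrow> vertex_bound v = (\<Sum>e\<in>{e \<in> E. v \<in> e}. edge_share e v)"
proof -
  consider "degree E v = 1" | "degree E v = 2" | "3 \<le> degree E v"
    using degree_pos[OF assms(1)] by linarith
  then have "vertex_bound v \<le> (\<Sum>e\<in>{e \<in> E. v \<in> e}. edge_share e v) \<and>
      (degree E v \<le> 2 \<longrightarrow> vertex_bound v = (\<Sum>e\<in>{e \<in> E. v \<in> e}. edge_share e v))"
  proof cases
    case 1
    then obtain y where y: "neighbors E v = {y}"
      using degree_oneE[OF simple] by blast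
    then have "{e \<in> E. v \<in> e} = {{v, y}}"
      by (rule edges_at_leaf[OF simple])
    moreover have "v \<in> pendant_neighbors E v0 \<longleftrightarrow> y = v0"
      using y 1 by (auto simp: pendant_neighbors_def insert_commute)
    ultimately show ?thesis
      using 1 assms(2) by (auto simp: vertex_bound_def edge_share_def degree_share_def)
  next
    case 2
    then have "edge_share e v = 0" for e
      using assms(2) by (simp add: edge_share_def degree_share_def)
    then show ?thesis
      using 2 by (simp add: vertex_bound_def pendant_neighbors_def)
  next
    case 3
    let ?T = "{e \<in> E. v \<in> e \<and> v0 \<notin> e}"
    have "(\<Sum>e\<in>{e \<in> E. v \<in> e}. edge_share e v) = (\<Sum>e\<in>{e \<in> E. v \<in> e}. if v0 \<notin> e then pendant_gap else 0)"
      using 3 assms(2) by (intro sum.cong) (auto simp: edge_share_def degree_share_def)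
    also have "\<dots> = (\<Sum>e\<in>?T. pendant_gap)"
      using sum.inter_filter[of "{e \<in> E. v \<in> e}" "\<lambda>_. pendant_gap" "\<lambda>e. v0 \<notin> e"] finite_E
      by (simp add: conj_assoc)
    finally have sum: "(\<Sum>e\<in>{e \<in> E. v \<in> e}. edge_share e v) = pendant_gap * card ?T"
      by simp
    have "e \<in> insert {v, v0} ?T" if e: "e \<in> E" "v \<in> e" for e
    proof (cases "v0 \<in> e")
      case True
      obtain z where "e = {v, z}"
        using edge_at_vertexE[OF simple e] by blast
      then show ?thesis
        using True assms(2) by auto
    qed (use e in simp)
    then have "card {e \<in> E. v \<in> e} \<le> card (insert {v, v0} ?T)"
      using finite_E by (intro card_mono) auto
    also have "\<dots> \<le> Suc (card ?T)"
      using finite_E by (simp add: card_insert_if)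
    finally have "degree E v \<le> Suc (card ?T)"
      by (simp add: degree_def)
    then have "pendant_gap * (real (degree E v) - 1) \<le> pendant_gap * card ?T"
      using pendant_gap_pos by (intro mult_left_mono) auto
    moreover have "v \<notin> pendant_neighbors E v0"
      using 3 by (simp add: pendant_neighbors_def)
    ultimately show ?thesis
      using 3 sum by (simp add: vertex_bound_def algebra_simps)
  qed
  then show "vertex_bound v \<le> (\<Sum>e\<in>{e \<in> E. v \<in> e}. edge_share e v)"
    and "degree E v \<le> 2 \<Longrightarrow> vertex_bound v = (\<Sum>e\<in>{e \<in> E. v \<in> e}. edge_share e v)"
    by auto
qed

lemma sum_vertex_bound:
  "(\<Sum>v\<in>V - {v0}. vertex_bound v) = pendant_gap * (2 - real (degree E v0))
     + pendant_hub_gain (degree E v0) * card (pendant_neighbors E v0)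
     + pendant_gap * card branch_vertices"
proof -
  let ?W = "V - {v0}"
  have "(\<Sum>v\<in>V. real (degree E v)) = 2 * real (card V)"
    using handshake[OF simple] card_edges by (simp flip: of_nat_sum)
  then have degrees: "(\<Sum>v\<in>?W. real (degree E v)) = 2 * real (card V) - real (degree E v0)"
    using sum.remove[OF finite_V hub_in_vertices, of "\<lambda>v. real (degree E v)"] by simp
  have card_W: "real (card ?W) = real (card V) - 1"
    using finite_V hub_in_vertices four_le_card by (simp add: of_nat_diff)
  have pendant: "(\<Sum>v\<in>?W. if v \<in> pendant_neighbors E v0 then pendant_hub_gain (degree E v0) else 0)
      = pendant_hub_gain (degree E v0) * card (pendant_neighbors E v0)"
    using sum.inter_restrict[of ?W "\<lambda>_. pendant_hub_gain (degree E v0)" "pendant_neighbors E v0"]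
      finite_V pendant_neighbors_subset by (simp add: Int_absorb1 Int_absorb2 mult.commute)
  have branch: "(\<Sum>v\<in>?W. if 3 \<le> degree E v then pendant_gap else 0) = pendant_gap * card branch_vertices"
    using sum.inter_filter[of ?W "\<lambda>_. pendant_gap" "\<lambda>v. 3 \<le> degree E v"] finite_V
    by (simp add: branch_vertices_def mult.commute)
  have "(\<Sum>v\<in>?W. vertex_bound v) = pendant_gap * ((\<Sum>v\<in>?W. real (degree E v)) - 2 * real (card ?W))
      + (\<Sum>v\<in>?W. if v \<in> pendant_neighbors E v0 then pendant_hub_gain (degree E v0) else 0)
      + (\<Sum>v\<in>?W. if 3 \<le> degree E v then pendant_gap else 0)"
    by (simp add: vertex_bound_def sum.distrib sum_subtractf sum_distrib_left right_diff_distrib)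
  then show ?thesis
    unfolding degrees card_W pendant branch by (simp add: algebra_simps)
qed

theorem sombor_ge:
  "U_Delta_sombor (card V) (degree E v0)
     + pendant_hub_gain (degree E v0) * card (pendant_neighbors E v0)
     + pendant_gap * card branch_vertices \<le> sombor E"
  and sombor_eq: "\<forall>v\<in>V - {v0}. degree E v \<le> 2 \<Longrightarrow>
    sombor E = U_Delta_sombor (card V) (degree E v0)
      + pendant_hub_gain (degree E v0) * card (pendant_neighbors E v0)"
proof -
  let ?excess = "\<lambda>e. sqrt (\<Sum>v\<in>e. real (degree E v) ^ 2) - sqrt 8"
  let ?share = "\<lambda>v. \<Sum>e\<in>{e \<in> E. v \<in> e}. edge_share e v"
  have sombor: "sombor E = real (card V) * sqrt 8 + (\<Sum>e\<in>E. ?excess e)"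
    unfolding sombor_def using card_edges by (simp add: sum_subtractf)
  have "(\<Sum>e\<in>E. \<Sum>v\<in>e. edge_share e v) = (\<Sum>v\<in>V. ?share v)"
    by (rule sum_vertex_edge_swap[OF simple])
  also have "\<dots> = real (degree E v0) * hub_gain (degree E v0) + (\<Sum>v\<in>V - {v0}. ?share v)"
    using sum.remove[OF finite_V hub_in_vertices, of ?share] share_sum_hub by simp
  finally have shares: "(\<Sum>e\<in>E. \<Sum>v\<in>e. edge_share e v)
      = real (degree E v0) * hub_gain (degree E v0) + (\<Sum>v\<in>V - {v0}. ?share v)" .
  have base: "real (card V) * sqrt 8 + real (degree E v0) * hub_gain (degree E v0)
      + pendant_gap * (2 - real (degree E v0)) = U_Delta_sombor (card V) (degree E v0)"
    by (simp add: U_Delta_sombor_def hub_gain_def pendant_gap_def algebra_simps)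
  have "(\<Sum>e\<in>E. \<Sum>v\<in>e. edge_share e v) \<le> (\<Sum>e\<in>E. ?excess e)"
    by (rule sum_mono) (rule edge_share_sum_le(1))
  moreover have "(\<Sum>v\<in>V - {v0}. vertex_bound v) \<le> (\<Sum>v\<in>V - {v0}. ?share v)"
    by (rule sum_mono) (simp add: vertex_bound_le_share_sum(1))
  ultimately show "U_Delta_sombor (card V) (degree E v0)
     + pendant_hub_gain (degree E v0) * card (pendant_neighbors E v0)
     + pendant_gap * card branch_vertices \<le> sombor E"
    using sombor shares base sum_vertex_bound by linarith
  assume low: "\<forall>v\<in>V - {v0}. degree E v \<le> 2"
  have "(\<Sum>e\<in>E. \<Sum>v\<in>e. edge_share e v) = (\<Sum>e\<in>E. ?excess e)"
    using edge_share_sum_le(2) low by (intro sum.cong) auto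
  moreover have "(\<Sum>v\<in>V - {v0}. vertex_bound v) = (\<Sum>v\<in>V - {v0}. ?share v)"
    using vertex_bound_le_share_sum(2) low by (intro sum.cong) auto
  moreover have "branch_vertices = {}"
    using low by (force simp: branch_vertices_def)
  ultimately show "sombor E = U_Delta_sombor (card V) (degree E v0)
      + pendant_hub_gain (degree E v0) * card (pendant_neighbors E v0)"
    using sombor shares base sum_vertex_bound by simp
qed

end

context unicyclic_hub
begin

lemma card_edges_within_neighbors: "card {e \<in> E. e \<subseteq> neighbors E v0} \<le> 1"
proof -
  let ?N = "neighbors E v0"
  let ?E0 = "{e \<in> E. v0 \<in> e}"
  have "insert v0 ?N \<subseteq> V"
    using hub_in_vertices neighbors_subset[OF simple] by blast
  then have "card {e \<in> E. e \<subseteq> insert v0 ?N} \<le> card (insert v0 ?N)"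
    by (rule card_edges_within_le_card[OF simple unicyclic]) simp
  also have "\<dots> = Suc (degree E v0)"
    using not_mem_neighbors_self[OF simple] finite_neighbors[OF simple]
      degree_eq_card_neighbors[OF simple] by simp
  finally have within: "card {e \<in> E. e \<subseteq> insert v0 ?N} \<le> Suc (card ?E0)"
    by (simp add: degree_def)
  have "e \<subseteq> insert v0 ?N" if e: "e \<in> ?E0" for e
  proof -
    obtain z where "e = {v0, z}"
      using edge_at_vertexE[OF simple, of e v0] e by blast
    then show ?thesis
      using e by auto
  qed
  then have "?E0 \<union> {e \<in> E. e \<subseteq> ?N} \<subseteq> {e \<in> E. e \<subseteq> insert v0 ?N}"
    by blast
  then have "card (?E0 \<union> {e \<in> E. e \<subseteq> ?N}) \<le> card {e \<in> E. e \<subseteq> insert v0 ?N}"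
    using finite_E by (intro card_mono) auto
  moreover have "card (?E0 \<union> {e \<in> E. e \<subseteq> ?N}) = card ?E0 + card {e \<in> E. e \<subseteq> ?N}"
    using finite_E not_mem_neighbors_self[OF simple] by (intro card_Un_disjoint) auto
  ultimately show ?thesis
    using within by linarith
qed

lemma card_non_pendant_neighbors_le:
  "card (neighbors E v0 - pendant_neighbors E v0)
     \<le> card {e \<in> E. v0 \<notin> e \<and> e \<inter> (neighbors E v0 - pendant_neighbors E v0) \<noteq> {}} + 1"
proof -
  let ?N = "neighbors E v0" and ?W = "neighbors E v0 - pendant_neighbors E v0"
  let ?F = "{e \<in> E. v0 \<notin> e}"
  have simple_F: "simple_graph V ?F"
    by (rule simple_graph_subset[OF simple]) auto
  have finite_W: "finite ?W"
    using finite_neighbors[OF simple] by simp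
  have "1 \<le> degree ?F u" if u: "u \<in> ?W" for u
  proof -
    have "u \<in> V"
      using u neighbors_subset[OF simple] by blast
    moreover have "degree E u \<noteq> 1"
      using u by (simp add: pendant_neighbors_def)
    ultimately have two: "2 \<le> degree E u"
      using degree_pos by fastforce
    have "u \<noteq> v0"
      using u not_mem_neighbors_self[OF simple] by blast
    have "{e \<in> E. u \<in> e} \<subseteq> insert {v0, u} {e \<in> ?F. u \<in> e}"
    proof
      fix e assume e: "e \<in> {e \<in> E. u \<in> e}"
      then obtain z where "e = {u, z}"
        using edge_at_vertexE[OF simple] by blast
      then show "e \<in> insert {v0, u} {e \<in> ?F. u \<in> e}"
        using e \<open>u \<noteq> v0\<close> by auto
    qed
    then have "card {e \<in> E. u \<in> e} \<le> card (insert {v0, u} {e \<in> ?F. u \<in> e})"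
      using finite_E by (intro card_mono) auto
    also have "\<dots> \<le> Suc (card {e \<in> ?F. u \<in> e})"
      using finite_E by (simp add: card_insert_if)
    finally have "degree E u \<le> Suc (degree ?F u)"
      by (simp add: degree_def)
    then show ?thesis
      using two by linarith
  qed
  then have "card ?W \<le> (\<Sum>u\<in>?W. degree ?F u)"
    using sum_mono[of ?W "\<lambda>_. 1::nat"] by simp
  also have "\<dots> = (\<Sum>e\<in>?F. card (e \<inter> ?W))"
    by (rule handshake_on[OF simple_F finite_W])
  also have "\<dots> \<le> (\<Sum>e\<in>?F. (if e \<inter> ?W \<noteq> {} then 1 else 0) + (if e \<subseteq> ?N then 1 else 0))"
  proof (rule sum_mono)
    fix e assume "e \<in> ?F"
    then have "card e = 2" "finite e"
      using card_edge[OF simple] by (auto simp: card_ge_0_finite)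
    have le: "card (e \<inter> ?W) \<le> card e"
      using \<open>finite e\<close> by (intro card_mono) auto
    have lt: "card (e \<inter> ?W) < card e" if "\<not> e \<subseteq> ?N"
      using \<open>finite e\<close> that by (intro psubset_card_mono) auto
    show "card (e \<inter> ?W) \<le> (if e \<inter> ?W \<noteq> {} then 1 else 0) + (if e \<subseteq> ?N then 1 else 0)"
    proof (cases "e \<inter> ?W = {}")
      case False
      show ?thesis
      proof (cases "e \<subseteq> ?N")
        case True
        then show ?thesis
          using le False \<open>card e = 2\<close> by simp
      next
        case outside: False
        then show ?thesis
          using lt[OF outside] False \<open>card e = 2\<close> by simp
      qed
    qed simp
  qed
  also have "\<dots> = card {e \<in> ?F. e \<inter> ?W \<noteq> {}} + card {e \<in> ?F. e \<subseteq> ?N}"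
    using sum.inter_filter[of ?F "\<lambda>_. 1::nat" "\<lambda>e. e \<inter> ?W \<noteq> {}"]
      sum.inter_filter[of ?F "\<lambda>_. 1::nat" "\<lambda>e. e \<subseteq> ?N"] finite_E
    by (simp add: sum.distrib)
  also have "card {e \<in> ?F. e \<subseteq> ?N} \<le> card {e \<in> E. e \<subseteq> ?N}"
    using finite_E by (intro card_mono) auto
  also have "\<dots> \<le> 1"
    by (rule card_edges_within_neighbors)
  finally show ?thesis
    by (simp add: conj_assoc)
qed

lemma two_hub_degree_le: "2 * degree E v0 \<le> card V + card (pendant_neighbors E v0) + 1"
proof -
  let ?W = "neighbors E v0 - pendant_neighbors E v0"
  let ?E0 = "{e \<in> E. v0 \<in> e}" and ?EW = "{e \<in> E. v0 \<notin> e \<and> e \<inter> ?W \<noteq> {}}"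
  have "card ?E0 + card ?EW = card (?E0 \<union> ?EW)"
    using finite_E by (intro card_Un_disjoint[symmetric]) auto
  also have "\<dots> \<le> card V"
    using finite_E card_edges card_mono[of E "?E0 \<union> ?EW"] by auto
  finally have "degree E v0 + card ?EW \<le> card V"
    by (simp add: degree_def)
  moreover have "pendant_neighbors E v0 \<subseteq> neighbors E v0"
    by (auto simp: pendant_neighbors_def)
  then have "card ?W = degree E v0 - card (pendant_neighbors E v0)"
    "card (pendant_neighbors E v0) \<le> degree E v0"
    using degree_eq_card_neighbors[OF simple] finite_neighbors[OF simple]
    by (simp_all add: card_Diff_subset card_mono finite_subset)
  ultimately show ?thesis
    using card_non_pendant_neighbors_le by linarith
qed

end

definition sole_branch_vertex :: "'a set \<Rightarrow> 'a set set \<Rightarrow> 'a \<Rightarrow> nat \<Rightarrow> nat \<Rightarrow> bool" where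
  "sole_branch_vertex V E w d k \<longleftrightarrow> w \<in> V \<and> degree E w = d \<and> (\<forall>v\<in>V - {w}. degree E v \<le> 2)
     \<and> card (pendant_neighbors E w) = k"

lemma sole_branch_vertex_iff_cycle_with_paths:
  assumes simple: "simple_graph V E" and unicyclic: "unicyclic V E"
  shows "sole_branch_vertex V E w d k \<longleftrightarrow>
    (\<exists>cs P. cycle_with_paths V E w cs P \<and> card P + 2 = d \<and> card {p \<in> P. length p = 2} = k)"
proof -
  have card_E: "card E = card V"
    using unicyclic by (simp add: unicyclic_def)
  show ?thesis
  proof
    assume "sole_branch_vertex V E w d k"
    then have w: "w \<in> V" "degree E w = d" "\<forall>v\<in>V - {w}. degree E v \<le> 2"
        "card (pendant_neighbors E w) = k"
      by (auto simp: sole_branch_vertex_def)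
    then obtain cs P where "cycle_with_paths V E w cs P"
      using cycle_with_paths_exists[OF simple unicyclic] by blast
    moreover from this have "card P + 2 = d" "card {p \<in> P. length p = 2} = k"
      using cycle_with_paths.degree_hub[OF _ card_E]
        cycle_with_paths.card_pendant_neighbors_hub[OF _ card_E] w(2,4) by auto
    ultimately show "\<exists>cs P. cycle_with_paths V E w cs P \<and> card P + 2 = d \<and>
        card {p \<in> P. length p = 2} = k"
      by blast
  next
    assume "\<exists>cs P. cycle_with_paths V E w cs P \<and> card P + 2 = d \<and> card {p \<in> P. length p = 2} = k"
    then obtain cs P where decomposition: "cycle_with_paths V E w cs P" and
      "card P + 2 = d" "card {p \<in> P. length p = 2} = k"
      by blast
    interpret cycle_with_paths V E w cs P
      by (fact decomposition)
    have "degree E v \<le> 2" if "v \<in> V - {w}" for v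
      using that degree_last_path[OF card_E] degree_inner[OF card_E]
      by (cases "v \<in> last ` P") auto
    then show "sole_branch_vertex V E w d k"
      unfolding sole_branch_vertex_def
      using hub_in_vertices degree_hub[OF card_E] card_pendant_neighbors_hub[OF card_E]
        \<open>card P + 2 = d\<close> \<open>card {p \<in> P. length p = 2} = k\<close> by auto
  qed
qed

lemma is_U_Delta_iff_cycle_with_paths:
  "is_U_Delta V E d \<longleftrightarrow>
    (\<exists>cs P. cycle_with_paths V E (hd cs) cs P \<and> card P = d - 2 \<and> (\<forall>p\<in>P. 3 \<le> length p))"
proof
  assume "is_U_Delta V E d"
  then obtain cs ps where cs: "distinct cs" "3 \<le> length cs" "length ps = d - 2"
    and paths: "\<forall>p\<in>set ps. distinct p \<and> 3 \<le> length p \<and> hd p = hd cs \<and> set p \<inter> set cs = {hd cs}"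
    and disjoint: "\<forall>i<length ps. \<forall>j<length ps. i \<noteq> j \<longrightarrow> set (ps ! i) \<inter> set (ps ! j) = {hd cs}"
    and V: "V = set cs \<union> \<Union> (set ` set ps)" and E: "E = cycle_edges cs \<union> \<Union> (path_edges ` set ps)"
    unfolding is_U_Delta_def by blast
  have "distinct ps"
  proof (rule distinct_conv_nth[THEN iffD2], intro allI impI)
    fix i j assume ij: "i < length ps" "j < length ps" "i \<noteq> j"
    then have "3 \<le> card (set (ps ! i))"
      using paths distinct_card[of "ps ! i"] by (metis nth_mem)
    moreover have "card (set (ps ! i) \<inter> set (ps ! j)) = 1"
      using disjoint ij by simp
    ultimately show "ps ! i \<noteq> ps ! j"
      by auto
  qed
  have "cycle_with_paths V E (hd cs) cs (set ps)"
  proof unfold_locales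
    show "set p \<inter> set q = {hd cs}" if "p \<in> set ps" "q \<in> set ps" "p \<noteq> q" for p q
      using that disjoint by (metis in_set_conv_nth)
  qed (use cs paths V E in auto)
  moreover have "card (set ps) = d - 2"
    using distinct_card[OF \<open>distinct ps\<close>] cs(3) by simp
  ultimately show "\<exists>cs P. cycle_with_paths V E (hd cs) cs P \<and> card P = d - 2 \<and> (\<forall>p\<in>P. 3 \<le> length p)"
    using paths by blast
next
  assume "\<exists>cs P. cycle_with_paths V E (hd cs) cs P \<and> card P = d - 2 \<and> (\<forall>p\<in>P. 3 \<le> length p)"
  then obtain cs P where decomposition: "cycle_with_paths V E (hd cs) cs P"
    and "card P = d - 2" "\<forall>p\<in>P. 3 \<le> length p"
    by blast
  interpret cycle_with_paths V E "hd cs" cs P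
    by (fact decomposition)
  obtain ps where ps: "set ps = P" "distinct ps"
    using finite_distinct_list[OF finite_paths] by blast
  have "set (ps ! i) \<inter> set (ps ! j) = {hd cs}" if "i < length ps" "j < length ps" "i \<noteq> j" for i j
    using that ps path_inter_path by (metis nth_eq_iff_index_eq nth_mem)
  then show "is_U_Delta V E d"
    unfolding is_U_Delta_def using ps distinct_card[OF ps(2)] \<open>card P = d - 2\<close> \<open>\<forall>p\<in>P. 3 \<le> length p\<close>
      distinct_cycle length_cycle distinct_path hd_path path_inter_cycle vertices edges
    by (intro exI[of _ cs] exI[of _ ps]) auto
qed

lemma is_U_Delta_iff_sole_branch_vertex:
  assumes "simple_graph V E" "unicyclic V E" "3 \<le> d"
  shows "is_U_Delta V E d \<longleftrightarrow> (\<exists>w. sole_branch_vertex V E w d 0)"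
proof -
  have long: "card {p \<in> P. length p = 2} = 0 \<longleftrightarrow> (\<forall>p\<in>P. 3 \<le> length p)"
    if "cycle_with_paths V E w cs P" for w cs P
    using cycle_with_paths.finite_paths[OF that] cycle_with_paths.length_path[OF that]
    by (force simp: le_Suc_eq)
  show ?thesis
    unfolding is_U_Delta_iff_cycle_with_paths sole_branch_vertex_iff_cycle_with_paths[OF assms(1,2)]
  proof
    assume "\<exists>cs P. cycle_with_paths V E (hd cs) cs P \<and> card P = d - 2 \<and> (\<forall>p\<in>P. 3 \<le> length p)"
    then show "\<exists>w cs P. cycle_with_paths V E w cs P \<and> card P + 2 = d \<and> card {p \<in> P. length p = 2} = 0"
      using long assms(3) by fastforce
  next
    assume "\<exists>w cs P. cycle_with_paths V E w cs P \<and> card P + 2 = d \<and> card {p \<in> P. length p = 2} = 0"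
    then obtain w cs P where "cycle_with_paths V E w cs P" "card P + 2 = d"
        "card {p \<in> P. length p = 2} = 0"
      by blast
    then show "\<exists>cs P. cycle_with_paths V E (hd cs) cs P \<and> card P = d - 2 \<and> (\<forall>p\<in>P. 3 \<le> length p)"
      using long cycle_with_paths.hd_cycle by fastforce
  qed
qed

definition U_n_Delta_paths :: "nat \<Rightarrow> nat \<Rightarrow> nat list set" where
  "U_n_Delta_paths p q =
    (\<lambda>i. [0, 3 + i]) ` {..<p} \<union> (\<lambda>j. [0, 3 + p + 2 * j, 4 + p + 2 * j]) ` {..<q}"

lemma card_U_n_Delta_paths:
  shows "card (U_n_Delta_paths p q) = p + q" and "card {l \<in> U_n_Delta_paths p q. length l = 2} = p"
proof -
  have "{l \<in> U_n_Delta_paths p q. length l = 2} = (\<lambda>i. [0, 3 + i]) ` {..<p}"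
    by (auto simp: U_n_Delta_paths_def)
  moreover have "card ((\<lambda>i. [0, 3 + i]) ` {..<p}) = p"
    by (simp add: card_image inj_on_def)
  moreover have "card ((\<lambda>j. [0, 3 + p + 2 * j, 4 + p + 2 * j]) ` {..<q}) = q"
    by (simp add: card_image inj_on_def)
  moreover have "(\<lambda>i. [0, 3 + i]) ` {..<p} \<inter> (\<lambda>j. [0, 3 + p + 2 * j, 4 + p + 2 * j]) ` {..<q} = {}"
    by auto
  ultimately show "card (U_n_Delta_paths p q) = p + q" "card {l \<in> U_n_Delta_paths p q. length l = 2} = p"
    unfolding U_n_Delta_paths_def by (simp_all add: card_Un_disjoint)
qed

lemma U_n_Delta_indices:
  fixes p q :: nat
  shows "{0..<3 + p + 2 * q} =
    {0, 1, 2} \<union> (\<lambda>i. 3 + i) ` {..<p} \<union> (\<lambda>j. 3 + p + 2 * j) ` {..<q} \<union> (\<lambda>j. 4 + p + 2 * j) ` {..<q}"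
proof (intro set_eqI iffI)
  fix i :: nat assume i: "i \<in> {0..<3 + p + 2 * q}"
  let ?R = "{0, 1, 2} \<union> (\<lambda>i. 3 + i) ` {..<p} \<union> (\<lambda>j. 3 + p + 2 * j) ` {..<q}
      \<union> (\<lambda>j. 4 + p + 2 * j) ` {..<q}"
  show "i \<in> ?R"
  proof (cases "i < 3 + p")
    case True
    show ?thesis
    proof (cases "i < 3")
      case False
      then have "i \<in> (\<lambda>i. 3 + i) ` {..<p}"
        using True by (intro image_eqI[of _ _ "i - 3"]) auto
      then show ?thesis
        by blast
    qed auto
  next
    case False
    define r where "r = i - (3 + p)"
    have i_eq: "i = 3 + p + r" and "r < 2 * q"
      using False i by (auto simp: r_def)
    show ?thesis
    proof (cases "even r")
      case True
      then obtain j where "r = 2 * j"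
        by blast
      then have "i \<in> (\<lambda>j. 3 + p + 2 * j) ` {..<q}"
        using i_eq \<open>r < 2 * q\<close> by (intro image_eqI[of _ _ j]) auto
      then show ?thesis
        by blast
    next
      case False
      then obtain j where "r = 2 * j + 1"
        using oddE by blast
      then have "i \<in> (\<lambda>j. 4 + p + 2 * j) ` {..<q}"
        using i_eq \<open>r < 2 * q\<close> by (intro image_eqI[of _ _ j]) auto
      then show ?thesis
        by blast
    qed
  qed
qed auto

lemma cycle_with_paths_U_n_Delta:
  fixes n d :: nat
  defines "p \<equiv> 2 * d - n - 1" and "q \<equiv> n - d - 1"
  assumes n: "n = 3 + p + 2 * q"
  shows "cycle_with_paths (U_n_Delta_V n d) (U_n_Delta_E n d) 0 [0, 1, 2] (U_n_Delta_paths p q)"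
proof unfold_locales
  show "finite (U_n_Delta_paths p q)"
    by (simp add: U_n_Delta_paths_def)
  fix l assume l: "l \<in> U_n_Delta_paths p q"
  then show "distinct l" "2 \<le> length l" "hd l = 0" "set l \<inter> set [0, 1, 2] = {0}"
    by (auto simp: U_n_Delta_paths_def)
  have parity: "3 + p + 2 * j \<noteq> 4 + p + 2 * j'" for j j'
    by presburger
  fix l' assume "l' \<in> U_n_Delta_paths p q" "l \<noteq> l'"
  then show "set l \<inter> set l' = {0}"
    using l parity by (auto simp: U_n_Delta_paths_def)
next
  show "U_n_Delta_V n d = set [0, 1, 2] \<union> \<Union> (set ` U_n_Delta_paths p q)"
    unfolding U_n_Delta_V_def n U_n_Delta_indices by (auto simp: U_n_Delta_paths_def)
  have paths: "\<Union> (path_edges ` U_n_Delta_paths p q) = (\<lambda>i. {0, 3 + i}) ` {..<p}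
      \<union> (\<lambda>j. {0, 3 + p + 2 * j}) ` {..<q} \<union> (\<lambda>j. {3 + p + 2 * j, 4 + p + 2 * j}) ` {..<q}"
    unfolding U_n_Delta_paths_def by (auto simp: path_edges_two path_edges_three)
  have cycle: "cycle_edges [0, 1, 2] = {{0, 1}, {1, 2}, {0, 2 :: nat}}"
  proof -
    have "{2, 0 :: nat} = {0, 2}"
      by blast
    then show ?thesis
      by (simp add: cycle_edges_def path_edges_three) blast
  qed
  have "U_n_Delta_E n d = {{0, 1}, {1, 2}, {0, 2}} \<union> (\<lambda>i. {0, 3 + i}) ` {..<p}
      \<union> (\<lambda>j. {0, 3 + p + 2 * j}) ` {..<q} \<union> (\<lambda>j. {3 + p + 2 * j, 4 + p + 2 * j}) ` {..<q}"
  proof -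
    have "{{0, 3 + i} | i. i < p} = (\<lambda>i. {0, 3 + i}) ` {..<p}"
      "{{0, 3 + p + 2 * j} | j. j < q} = (\<lambda>j. {0, 3 + p + 2 * j}) ` {..<q}"
      "{{3 + p + 2 * j, 4 + p + 2 * j} | j. j < q} = (\<lambda>j. {3 + p + 2 * j, 4 + p + 2 * j}) ` {..<q}"
      by blast+
    then show ?thesis
      unfolding U_n_Delta_E_def Let_def p_def[symmetric] q_def[symmetric] by simp
  qed
  then show "U_n_Delta_E n d = cycle_edges [0, 1, 2] \<union> \<Union> (path_edges ` U_n_Delta_paths p q)"
    unfolding cycle paths by (simp only: Un_assoc)
qed simp_all

lemma graph_iso_if_bij_betw_image:
  assumes "bij_betw h V' V" "\<forall>e\<in>E'. e \<subseteq> V'" "E = (`) h ` E'"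
  shows "graph_iso V E V' E'"
  unfolding graph_iso_def
proof (intro exI conjI ballI)
  let ?f = "inv_into V' h"
  show "bij_betw ?f V V'"
    by (rule bij_betw_inv_into[OF assms(1)])
  have inj: "inj_on h V'"
    using assms(1) by (simp add: bij_betw_def)
  fix x y assume "x \<in> V" "y \<in> V"
  then obtain a b where ab: "a \<in> V'" "b \<in> V'" "x = h a" "y = h b"
    using assms(1) by (metis bij_betw_imp_surj_on imageE)
  have "{h a, h b} \<in> (`) h ` E' \<longleftrightarrow> {a, b} \<in> E'"
  proof
    assume "{h a, h b} \<in> (`) h ` E'"
    then obtain e where e: "e \<in> E'" "h ` e = h ` {a, b}"
      by auto
    moreover have "e \<subseteq> V'" "{a, b} \<subseteq> V'"
      using assms(2) e(1) ab(1,2) by auto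
    ultimately have "e = {a, b}"
      using inj_on_image_eq_iff[OF inj] by blast
    then show "{a, b} \<in> E'"
      using e(1) by simp
  next
    assume "{a, b} \<in> E'"
    then show "{h a, h b} \<in> (`) h ` E'"
      using image_eqI[of "{h a, h b}" "(`) h" "{a, b}" E'] by simp
  qed
  moreover have "?f x = a" "?f y = b"
    using ab inj by (simp_all add: inv_into_f_f)
  ultimately show "{x, y} \<in> E \<longleftrightarrow> {?f x, ?f y} \<in> E'"
    using assms(3) ab(3,4) by simp
qed

lemma graph_iso_imp_bij_betw_image:
  assumes "graph_iso V E V' E'" "simple_graph V E" "simple_graph V' E'"
  obtains h where "bij_betw h V' V" "E = (`) h ` E'"
proof -
  obtain f where f: "bij_betw f V V'" "\<forall>x\<in>V. \<forall>y\<in>V. {x, y} \<in> E \<longleftrightarrow> {f x, f y} \<in> E'"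
    using assms(1) unfolding graph_iso_def by blast
  let ?h = "inv_into V f"
  have "E = (`) ?h ` E'"
  proof (intro set_eqI iffI)
    fix e assume "e \<in> E"
    then obtain x y where e: "e = {x, y}" "x \<in> V" "y \<in> V"
      using edgeE[OF assms(2)] by metis
    then have "{f x, f y} \<in> E'"
      using f(2) \<open>e \<in> E\<close> by blast
    moreover have "?h ` {f x, f y} = e"
      using e f(1) by (simp add: bij_betw_inv_into_left)
    ultimately show "e \<in> (`) ?h ` E'"
      by blast
  next
    fix e assume "e \<in> (`) ?h ` E'"
    then obtain e' where e': "e' \<in> E'" "e = ?h ` e'"
      by blast
    then obtain i j where ij: "e' = {i, j}" "i \<in> V'" "j \<in> V'"
      using edgeE[OF assms(3)] by metis
    then have "?h i \<in> V" "?h j \<in> V" "f (?h i) = i" "f (?h j) = j"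
      using f(1) by (auto simp: bij_betw_def inv_into_into f_inv_into_f)
    then have "{?h i, ?h j} \<in> E"
      using f(2) e'(1) ij(1) by metis
    then show "e \<in> E"
      using e'(2) ij(1) by simp
  qed
  then show ?thesis
    using that bij_betw_inv_into[OF f(1)] by blast
qed

lemma (in cycle_with_paths) U_n_Delta_enumeration:
  assumes "length cs = 3" "\<And>l. l \<in> P \<Longrightarrow> length l \<le> 3"
    and "card {l \<in> P. length l = 2} = p" "card {l \<in> P. length l \<noteq> 2} = q"
  obtains h where "map h [0, 1, 2] = cs" "map h ` U_n_Delta_paths p q = P"
proof -
  let ?P2 = "{l \<in> P. length l = 2}" and ?P3 = "{l \<in> P. length l \<noteq> 2}"
  obtain \<kappa> where \<kappa>: "bij_betw \<kappa> {..<p} ?P2"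
    using ex_bij_betw_nat_finite[of ?P2] finite_paths assms(3) by (auto simp: atLeast0LessThan)
  obtain g where g: "bij_betw g {..<q} ?P3"
    using ex_bij_betw_nat_finite[of ?P3] finite_paths assms(4) by (auto simp: atLeast0LessThan)
  define h where "h i = (if i < 3 then cs ! i else if i < 3 + p then \<kappa> (i - 3) ! 1
      else if even (i - (3 + p)) then g ((i - (3 + p)) div 2) ! 1 else g ((i - (3 + p)) div 2) ! 2)"
    for i
  have hub: "h 0 = v0"
    using hd_cycle cycle_ne_Nil by (simp add: h_def hd_conv_nth)
  have list_eq: "l = map h idx" if "l \<in> P" "length l = length idx" "idx ! 0 = 0"
    "\<And>k. 0 < k \<Longrightarrow> k < length l \<Longrightarrow> h (idx ! k) = l ! k" for l idx
  proof (rule nth_equalityI)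
    show "l ! k = map h idx ! k" if "k < length l" for k
      using that \<open>l \<in> P\<close> \<open>length l = length idx\<close> \<open>idx ! 0 = 0\<close> hub hd_path path_ne_Nil
        \<open>\<And>k. 0 < k \<Longrightarrow> k < length l \<Longrightarrow> h (idx ! k) = l ! k\<close>
      by (cases "k = 0") (auto simp: hd_conv_nth)
  qed (use that in simp)
  have "map h [0, 1, 2] = cs"
    using assms(1) by (intro nth_equalityI) (auto simp: h_def less_Suc_eq numeral_3_eq_3 numeral_2_eq_2)
  moreover have "\<kappa> i = map h [0, 3 + i]" if "i < p" for i
  proof -
    have "\<kappa> i \<in> ?P2"
      using \<kappa> that by (auto simp: bij_betw_def)
    then show ?thesis
      using that by (intro list_eq) (auto simp: h_def less_Suc_eq numeral_2_eq_2)
  qed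
  moreover have "g j = map h [0, 3 + p + 2 * j, 4 + p + 2 * j]" if "j < q" for j
  proof -
    have "g j \<in> ?P3"
      using g that by (auto simp: bij_betw_def)
    then have "length (g j) = 3"
      using assms(2) length_path by (metis (mono_tags, lifting) le_antisym mem_Collect_eq not_less_eq_eq
          numeral_2_eq_2 numeral_3_eq_3)
    have "4 + p + 2 * j - (3 + p) = 2 * j + 1"
      by simp
    then have h: "h (3 + p + 2 * j) = g j ! 1" "h (4 + p + 2 * j) = g j ! 2"
      by (simp_all add: h_def)
    show ?thesis
    proof (rule list_eq)
      fix k assume "0 < k" "k < length (g j)"
      then have "k = 1 \<or> k = 2"
        using \<open>length (g j) = 3\<close> by auto
      then show "h ([0, 3 + p + 2 * j, 4 + p + 2 * j] ! k) = g j ! k"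
        using h by auto
    qed (use \<open>g j \<in> ?P3\<close> \<open>length (g j) = 3\<close> in auto)
  qed
  moreover have "P = \<kappa> ` {..<p} \<union> g ` {..<q}"
    using \<kappa> g by (auto simp: bij_betw_def)
  ultimately show ?thesis
    using that unfolding U_n_Delta_paths_def by (simp add: image_Un image_image)
qed

lemma U_n_Delta_parameters:
  fixes n d :: nat
  assumes "n + 2 \<le> 2 * d" "d + 2 \<le> n"
  shows "n = 3 + (2 * d - n - 1) + 2 * (n - d - 1)" "d = 2 + (2 * d - n - 1) + (n - d - 1)"
  using assms by simp_all

theorem graph_iso_U_n_Delta_iff:
  assumes simple: "simple_graph V E" and unicyclic: "unicyclic V E" and card_V: "card V = n"
    and "n + 2 \<le> 2 * d" "d + 2 \<le> n"
  shows "graph_iso V E (U_n_Delta_V n d) (U_n_Delta_E n d) \<longleftrightarrow>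
    (\<exists>w. sole_branch_vertex V E w d (2 * d - n - 1))"
proof -
  define p q where "p = 2 * d - n - 1" and "q = n - d - 1"
  have n: "n = 3 + p + 2 * q" and d: "d = 2 + p + q"
    using U_n_Delta_parameters[OF assms(4,5)] by (simp_all add: p_def q_def)
  interpret U: cycle_with_paths "U_n_Delta_V n d" "U_n_Delta_E n d" 0 "[0, 1, 2]" "U_n_Delta_paths p q"
    using cycle_with_paths_U_n_Delta[OF U_n_Delta_parameters(1)[OF assms(4,5)]]
    unfolding p_def q_def .
  have card_U: "card (U_n_Delta_V n d) = n"
    by (simp add: U_n_Delta_V_def)
  show ?thesis
    unfolding sole_branch_vertex_iff_cycle_with_paths[OF simple unicyclic] p_def[symmetric]
  proof
    assume "graph_iso V E (U_n_Delta_V n d) (U_n_Delta_E n d)"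
    then obtain h where h: "bij_betw h (U_n_Delta_V n d) V" "E = (`) h ` U_n_Delta_E n d"
      using graph_iso_imp_bij_betw_image[OF _ simple U.simple_graph] by blast
    then have inj: "inj_on h (U_n_Delta_V n d)" and V: "V = h ` U_n_Delta_V n d"
      by (auto simp: bij_betw_def)
    have inj_map: "inj_on (map h) (U_n_Delta_paths p q)"
    proof (rule inj_onI)
      fix l l' assume l: "l \<in> U_n_Delta_paths p q" "l' \<in> U_n_Delta_paths p q" "map h l = map h l'"
      have "set l \<union> set l' \<subseteq> U_n_Delta_V n d"
        using U.vertices l(1,2) by blast
      then show "l = l'"
        using map_inj_on[OF l(3)] inj_on_subset[OF inj] by blast
    qed
    moreover have "{l \<in> map h ` U_n_Delta_paths p q. length l = 2}
        = map h ` {l \<in> U_n_Delta_paths p q. length l = 2}"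
      by auto
    moreover have "card (map h ` {l \<in> U_n_Delta_paths p q. length l = 2}) = p"
      using card_image[OF inj_on_subset[OF inj_map]] card_U_n_Delta_paths(2)[of p q] by simp
    ultimately have "card (map h ` U_n_Delta_paths p q) = p + q"
      "card {l \<in> map h ` U_n_Delta_paths p q. length l = 2} = p"
      using card_image[OF inj_map] card_U_n_Delta_paths(1)[of p q] by simp_all
    moreover have "cycle_with_paths V E (h 0) (map h [0, 1, 2]) (map h ` U_n_Delta_paths p q)"
      using U.inj_image[OF inj] V h(2) by simp
    ultimately show "\<exists>w cs P. cycle_with_paths V E w cs P \<and> card P + 2 = d \<and>
        card {l \<in> P. length l = 2} = p"
      using d by fastforce
  next
    assume "\<exists>w cs P. cycle_with_paths V E w cs P \<and> card P + 2 = d \<and> card {l \<in> P. length l = 2} = p"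
    then obtain w cs P where decomposition: "cycle_with_paths V E w cs P"
      and "card P + 2 = d" and card_P2: "card {l \<in> P. length l = 2} = p"
      by blast
    interpret G: cycle_with_paths V E w cs P
      by (fact decomposition)
    have "card P = card {l \<in> P. length l = 2} + card {l \<in> P. length l \<noteq> 2}"
      using G.finite_paths by (subst card_Un_disjoint[symmetric]) (auto intro: arg_cong[where f = card])
    then have card_P3: "card {l \<in> P. length l \<noteq> 2} = q"
      using \<open>card P + 2 = d\<close> card_P2 d by simp
    have "card V \<le> 3 + card {l \<in> P. length l = 2} + 2 * card {l \<in> P. length l \<noteq> 2}"
      using card_V n card_P2 card_P3 by simp
    then have "length cs = 3" "\<And>l. l \<in> P \<Longrightarrow> length l \<le> 3"
      using G.lengths_if_card_le by blast+
    then obtain h where h: "map h [0, 1, 2] = cs" "map h ` U_n_Delta_paths p q = P"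
      using G.U_n_Delta_enumeration[OF _ _ card_P2 card_P3] by blast
    have V: "h ` U_n_Delta_V n d = V"
      unfolding U.vertices G.vertices h(1,2)[symmetric] by (simp add: image_Un image_UN)
    then have inj: "inj_on h (U_n_Delta_V n d)"
      using card_U card_V by (intro eq_card_imp_inj_on) (simp_all add: U_n_Delta_V_def)
    have "(`) h ` U_n_Delta_E n d = E"
      using cycle_with_paths.edges[OF U.inj_image[OF inj]] G.edges h by simp
    moreover have "\<forall>e\<in>U_n_Delta_E n d. e \<subseteq> U_n_Delta_V n d"
      using edge_subset_vertices[OF U.simple_graph] by blast
    ultimately show "graph_iso V E (U_n_Delta_V n d) (U_n_Delta_E n d)"
      using V inj by (intro graph_iso_if_bij_betw_image[of h]) (auto simp: bij_betw_def)
  qed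
qed

context unicyclic_hub
begin

lemma sombor_ge_pendant:
  assumes "k \<le> card (pendant_neighbors E v0)"
  shows "U_Delta_sombor (card V) (degree E v0) + pendant_hub_gain (degree E v0) * k \<le> sombor E"
proof -
  have "pendant_hub_gain (degree E v0) * k \<le> pendant_hub_gain (degree E v0) * card (pendant_neighbors E v0)"
    using assms pendant_hub_gain_pos[OF three_le_hub_degree] by simp
  moreover have "0 \<le> pendant_gap * card branch_vertices"
    using pendant_gap_pos by simp
  ultimately show ?thesis
    using sombor_ge by linarith
qed

lemma sombor_eq_iff_sole_branch_vertex:
  assumes "k \<le> card (pendant_neighbors E v0)"
  shows "sombor E = U_Delta_sombor (card V) (degree E v0) + pendant_hub_gain (degree E v0) * k
    \<longleftrightarrow> (\<exists>w. sole_branch_vertex V E w (degree E v0) k)"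
proof
  let ?gain = "pendant_hub_gain (degree E v0)"
  assume eq: "sombor E = U_Delta_sombor (card V) (degree E v0) + ?gain * k"
  have "?gain * (card (pendant_neighbors E v0) - real k) + pendant_gap * card branch_vertices \<le> 0"
    using sombor_ge eq by (simp add: algebra_simps)
  moreover have "0 \<le> ?gain * (card (pendant_neighbors E v0) - real k)" "0 \<le> pendant_gap * card branch_vertices"
    using assms pendant_hub_gain_pos[OF three_le_hub_degree] pendant_gap_pos by simp_all
  ultimately have "?gain * (card (pendant_neighbors E v0) - real k) = 0"
    "pendant_gap * card branch_vertices = 0"
    by linarith+
  then have "card (pendant_neighbors E v0) = k" "card branch_vertices = 0"
    using pendant_hub_gain_pos[OF three_le_hub_degree] pendant_gap_pos by simp_all
  moreover have "finite branch_vertices"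
    using finite_V by (simp add: branch_vertices_def)
  ultimately show "\<exists>w. sole_branch_vertex V E w (degree E v0) k"
    using hub_in_vertices by (force simp: sole_branch_vertex_def branch_vertices_def)
next
  assume "\<exists>w. sole_branch_vertex V E w (degree E v0) k"
  then obtain w where w: "sole_branch_vertex V E w (degree E v0) k"
    by blast
  then interpret W: unicyclic_hub V E w
    using simple unicyclic three_le_hub_degree by unfold_locales (auto simp: sole_branch_vertex_def)
  show "sombor E = U_Delta_sombor (card V) (degree E v0) + pendant_hub_gain (degree E v0) * k"
    using W.sombor_eq w by (simp add: sole_branch_vertex_def)
qed

end

definition U_n_Delta_sombor :: "nat \<Rightarrow> nat \<Rightarrow> real" where
  "U_n_Delta_sombor n d =
    (real n - real d + 1) * sqrt (real d ^ 2 + 4) + (2 * real d - real n - 1) * sqrt (real d ^ 2 + 1)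
    + sqrt 5 * (real n - real d - 1) + sqrt 8"

lemma U_n_Delta_sombor_eq:
  assumes "n + 2 \<le> 2 * d"
  shows "U_n_Delta_sombor n d = U_Delta_sombor n d + pendant_hub_gain d * (2 * d - n - 1)"
proof -
  have "real (2 * d - n - 1) = 2 * real d - real n - 1"
    using assms by (simp add: of_nat_diff)
  then show ?thesis
    unfolding U_n_Delta_sombor_def U_Delta_sombor_def pendant_hub_gain_def pendant_gap_def
    by (simp add: algebra_simps)
qed

theorem theorem1p2:
  fixes V :: "'a set" and E :: "'a set set" and n \<Delta> :: nat
  assumes "simple_graph V E" and "unicyclic V E"
    and "card V = n" and "n \<ge> 5"
    and "3 \<le> \<Delta>" and "\<Delta> \<le> n - 2"
    and "max_degree V E = \<Delta>"
  shows "(\<Delta> \<le> (n + 1) div 2 \<longrightarrow>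
            sombor E \<ge> real \<Delta> * sqrt (real \<Delta> ^ 2 + 4) + sqrt 8 * (real n - 2 * real \<Delta> + 2)
                        + sqrt 5 * (real \<Delta> - 2) \<and>
            (sombor E = real \<Delta> * sqrt (real \<Delta> ^ 2 + 4) + sqrt 8 * (real n - 2 * real \<Delta> + 2)
                        + sqrt 5 * (real \<Delta> - 2) \<longleftrightarrow> is_U_Delta V E \<Delta>))
       \<and> ((n + 1) div 2 < \<Delta> \<longrightarrow>
            sombor E \<ge> (real n - real \<Delta> + 1) * sqrt (real \<Delta> ^ 2 + 4)
                        + (2 * real \<Delta> - real n - 1) * sqrt (real \<Delta> ^ 2 + 1)
                        + sqrt 5 * (real n - real \<Delta> - 1) + sqrt 8 \<and>
            (sombor E = (real n - real \<Delta> + 1) * sqrt (real \<Delta> ^ 2 + 4)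
                        + (2 * real \<Delta> - real n - 1) * sqrt (real \<Delta> ^ 2 + 1)
                        + sqrt 5 * (real n - real \<Delta> - 1) + sqrt 8
             \<longleftrightarrow> graph_iso V E (U_n_Delta_V n \<Delta>) (U_n_Delta_E n \<Delta>)))"
proof -
  have "\<Delta> \<in> degree E ` V"
    using assms(3,4,7) finite_vertices[OF assms(1)] unfolding max_degree_def
    by (metis Max_in card.empty finite_imageI image_is_empty not_numeral_le_zero)
  then obtain v0 where "v0 \<in> V" "degree E v0 = \<Delta>"
    by blast
  then interpret unicyclic_hub V E v0
    using assms by unfold_locales simp_all
  have small: "U_Delta_sombor n \<Delta> \<le> sombor E \<and> (sombor E = U_Delta_sombor n \<Delta> \<longleftrightarrow> is_U_Delta V E \<Delta>)"
    using sombor_ge_pendant[of 0] sombor_eq_iff_sole_branch_vertex[of 0] \<open>degree E v0 = \<Delta>\<close> assms(3)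
      is_U_Delta_iff_sole_branch_vertex[OF assms(1,2,5)] by simp
  have large: "U_n_Delta_sombor n \<Delta> \<le> sombor E \<and>
      (sombor E = U_n_Delta_sombor n \<Delta> \<longleftrightarrow> graph_iso V E (U_n_Delta_V n \<Delta>) (U_n_Delta_E n \<Delta>))"
    if "(n + 1) div 2 < \<Delta>"
  proof -
    have large_degree: "n + 2 \<le> 2 * \<Delta>" "\<Delta> + 2 \<le> n"
      using that assms(4,6) by presburger+
    have pendant: "2 * \<Delta> - n - 1 \<le> card (pendant_neighbors E v0)"
      using two_hub_degree_le assms(3) \<open>degree E v0 = \<Delta>\<close> by linarith
    show ?thesis
      unfolding U_n_Delta_sombor_eq[OF large_degree(1)]
      using sombor_ge_pendant[OF pendant] sombor_eq_iff_sole_branch_vertex[OF pendant]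
        graph_iso_U_n_Delta_iff[OF assms(1,2,3) large_degree] \<open>degree E v0 = \<Delta>\<close> assms(3)
      by simp
  qed
  show ?thesis
    unfolding U_Delta_sombor_def[symmetric] U_n_Delta_sombor_def[symmetric]
    using small large by blast
qed

end
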